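(* Let $\mathbb{X}$ be a stationary $N$-dimensional VAR process of order $p$ with associated causal time-series graph $\mathcal{G}$, and let $\mathbf{X} = (X^{i_1}(s_1), \dots, X^{i_n}(s_n))$ and $\mathbf{Y} = (Y^{1}, \dots, Y^{m})$ be two disjoint finite sets of nodes of $\mathcal{G}$. Then each variable $Y^{j}$ of $\mathbf{Y}$ admits the description $$Y^{j} = \sum_{l=1}^{n} \theta(j,l)\, X^{i_l}(s_l) + g^j(\mathbf{X}'') + \eta,$$ where $\mathbf{X}''$ is a random vector whose components are the elements of a finite subset of $\mathrm{anc}(Y^{j})_{\neg \mathbf{X}}$, $g^j$ is a linear function, $\eta$ is a Gaussian random variable, and $$\theta(j,l) = \sum_{q \in \mathcal{P}(\mathbf{X}, X^{i_l}(s_l), Y^{j})} w(q)$$ is the sum of the weights of all proper causal paths from $\mathbf{X}$ to $Y^{j}$ with starting point $X^{i_l}(s_l)$. In particular, the causal effect function $\mathbf{x} \mapsto \mathbb{E}(\mathbf{Y} \mid \mathrm{do}(\mathbf{X}) \coloneqq \mathbf{x})$ of $\mathbf{X}$ on $\mathbf{Y}$ is linear and given by the matrix $\Theta = (\theta(j,l))_{j,l} \in \mathbb{R}^{m \times n}$.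
   Context: A VAR process of order $p$ is a stochastic process $\{\mathbb{X}(t)\}_{t\in\mathbb{Z}}$ of $N$-dimensional random vectors $\mathbb{X}(t) = (X^1(t),\dots,X^N(t))$ satisfying $\mathbb{X}(t) = \sum_{k=1}^{p} \Phi(k)\mathbb{X}(t-k) + \eta(t)$, where $\Phi(k)\in\mathbb{R}^{N\times N}$ and $\eta(t)$ is zero-mean Gaussian white noise whose components are mutually and serially independent. Its causal time-series graph $\mathcal{G}$ has node set $\{X^i(t): 1\le i\le N, t\in\mathbb{Z}\}$ and a directed edge $X^k(t-s)\to X^l(t)$ (for $1\le s\le p$) iff $\Phi(s)_{l,k}\neq 0$; each node is thus a linear function of its parents plus its own noise term. An intervention $\mathrm{do}(\mathbf{X})\coloneqq\mathbf{x}$ replaces the defining equation of each node $X^{i_l}(s_l)\in\mathbf{X}$ by the constant $x_l$, leaving all other equations and noise variables unchanged; $\mathbb{E}(\cdot\mid\mathrm{do}(\mathbf{X})\coloneqq\mathbf{x})$ denotes expectation under the resulting distribution. A causal (directed) path is a sequence of nodes $(Z_1,\dots,Z_k)$ with $Z_r\to Z_{r+1}$ an edge for every $r$; it is proper from a set $\mathbf{X}$ if only its starting point lies in $\mathbf{X}$. $\mathcal{P}(\mathbf{X}, X^{i_l}(s_l), Y)$ denotes the set of proper causal paths from $\mathbf{X}$ to $Y$ with starting point $X^{i_l}(s_l)$. The weight of a causal path $q = (X^{a_1}(t_1),\dots,X^{a_k}(t_k))$ is $w(q) = \prod_{r=1}^{k-1}\Phi(t_{r+1}-t_r)_{a_{r+1},a_r}$.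 $\mathrm{anc}(Y)$ is the set of nodes having a directed path to $Y$, $\mathrm{des}(\mathbf{X})$ the set of nodes reachable by a directed path from some node of $\mathbf{X}$, and $\mathrm{anc}(Y)_{\neg\mathbf{X}} = \mathrm{anc}(Y)\setminus(\mathbf{X}\cup\mathrm{des}(\mathbf{X}))$. *)

theory Defs
  imports "HOL-Probability.Probability" "Jordan_Normal_Form.Determinant"
begin

text \<open>Nodes of the time-series graph: pairs (component index i, time t), with
  component indices 0,...,N-1 (0-based).  The coefficient matrices are given by
  Phi s l k = Phi(s)_{l,k} (entry in row l, column k of the lag-s matrix).\<close>

type_synonym node = "nat \<times> int"

definition node_ok :: "nat \<Rightarrow> node \<Rightarrow> bool" where
  "node_ok N v \<longleftrightarrow> fst v < N"

definition ts_edge :: "nat \<Rightarrow> nat \<Rightarrow> (nat \<Rightarrow> nat \<Rightarrow> nat \<Rightarrow> real) \<Rightarrow> node \<Rightarrow> node \<Rightarrow> bool" where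
  "ts_edge N p Phi u v \<longleftrightarrow> fst u < N \<and> fst v < N \<and> 1 \<le> snd v - snd u \<and> snd v - snd u \<le> int p
     \<and> Phi (nat (snd v - snd u)) (fst v) (fst u) \<noteq> 0"

definition ts_edges :: "nat \<Rightarrow> nat \<Rightarrow> (nat \<Rightarrow> nat \<Rightarrow> nat \<Rightarrow> real) \<Rightarrow> node rel" where
  "ts_edges N p Phi = {(u, v). ts_edge N p Phi u v}"

fun causal_path :: "nat \<Rightarrow> nat \<Rightarrow> (nat \<Rightarrow> nat \<Rightarrow> nat \<Rightarrow> real) \<Rightarrow> node list \<Rightarrow> bool" where
  "causal_path N p Phi [] = False"
| "causal_path N p Phi [v] = node_ok N v"
| "causal_path N p Phi (u # v # rest) = (ts_edge N p Phi u v \<and> causal_path N p Phi (v # rest))"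

fun path_weight :: "(nat \<Rightarrow> nat \<Rightarrow> nat \<Rightarrow> real) \<Rightarrow> node list \<Rightarrow> real" where
  "path_weight Phi [] = 1"
| "path_weight Phi [v] = 1"
| "path_weight Phi (u # v # rest) =
     Phi (nat (snd v - snd u)) (fst v) (fst u) * path_weight Phi (v # rest)"

definition proper_paths :: "nat \<Rightarrow> nat \<Rightarrow> (nat \<Rightarrow> nat \<Rightarrow> nat \<Rightarrow> real) \<Rightarrow> node set \<Rightarrow> node \<Rightarrow> node \<Rightarrow> node list set" where
  "proper_paths N p Phi Xs x Y =
     {q. causal_path N p Phi q \<and> hd q = x \<and> last q = Y \<and> (\<forall>z\<in>set (tl q). z \<notin> Xs)}"

definition theta :: "nat \<Rightarrow> nat \<Rightarrow> (nat \<Rightarrow> nat \<Rightarrow> nat \<Rightarrow> real) \<Rightarrow> node set \<Rightarrow> node \<Rightarrow> node \<Rightarrow> real" where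
  "theta N p Phi Xs x Y = (\<Sum>q\<in>proper_paths N p Phi Xs x Y. path_weight Phi q)"

definition anc :: "nat \<Rightarrow> nat \<Rightarrow> (nat \<Rightarrow> nat \<Rightarrow> nat \<Rightarrow> real) \<Rightarrow> node \<Rightarrow> node set" where
  "anc N p Phi Y = {u. (u, Y) \<in> (ts_edges N p Phi)\<^sup>+}"

definition des :: "nat \<Rightarrow> nat \<Rightarrow> (nat \<Rightarrow> nat \<Rightarrow> nat \<Rightarrow> real) \<Rightarrow> node set \<Rightarrow> node set" where
  "des N p Phi Xs = {v. \<exists>u\<in>Xs. (u, v) \<in> (ts_edges N p Phi)\<^sup>+}"

definition anc_not :: "nat \<Rightarrow> nat \<Rightarrow> (nat \<Rightarrow> nat \<Rightarrow> nat \<Rightarrow> real) \<Rightarrow> node \<Rightarrow> node set \<Rightarrow> node set" where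
  "anc_not N p Phi Y Xs = anc N p Phi Y - (Xs \<union> des N p Phi Xs)"

text \<open>Gaussian random variable (a degenerate, i.e. a.s. constant, variable is
  counted as Gaussian with variance 0).\<close>
definition gaussian_rv :: "'a measure \<Rightarrow> ('a \<Rightarrow> real) \<Rightarrow> bool" where
  "gaussian_rv M Z \<longleftrightarrow> Z \<in> borel_measurable M \<and>
     ((\<exists>\<mu> \<sigma>. 0 < \<sigma> \<and> distributed M lborel Z (normal_density \<mu> \<sigma>)) \<or> (\<exists>c. AE \<omega> in M. Z \<omega> = c))"

definition var_rhs :: "nat \<Rightarrow> nat \<Rightarrow> (nat \<Rightarrow> nat \<Rightarrow> nat \<Rightarrow> real) \<Rightarrow> (node \<Rightarrow> real) \<Rightarrow> node \<Rightarrow> real" where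
  "var_rhs N p Phi x v = (\<Sum>k\<in>{1..p}. \<Sum>j<N. Phi k (fst v) j * x (j, snd v - int k))"

definition var_stable :: "nat \<Rightarrow> nat \<Rightarrow> (nat \<Rightarrow> nat \<Rightarrow> nat \<Rightarrow> real) \<Rightarrow> bool" where
  "var_stable N p Phi \<longleftrightarrow> (\<forall>z::complex. cmod z \<le> 1 \<longrightarrow>
     det (mat N N (\<lambda>(l, k). (if l = k then 1 else 0)
        - (\<Sum>s\<in>{1..p}. z ^ s * complex_of_real (Phi s l k)))) \<noteq> 0)"

definition gaussian_white_noise :: "'a measure \<Rightarrow> nat \<Rightarrow> (node \<Rightarrow> 'a \<Rightarrow> real) \<Rightarrow> bool" where
  "gaussian_white_noise M N eta \<longleftrightarrow>
     (\<exists>\<sigma>::nat \<Rightarrow> real. (\<forall>i<N. 0 < \<sigma> i) \<and>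
        (\<forall>v. fst v < N \<longrightarrow> distributed M lborel (eta v) (normal_density 0 (\<sigma> (fst v)))))
     \<and> prob_space.indep_vars M (\<lambda>_. borel) eta {v. fst v < N}"

definition weakly_stationary :: "'a measure \<Rightarrow> nat \<Rightarrow> (node \<Rightarrow> 'a \<Rightarrow> real) \<Rightarrow> bool" where
  "weakly_stationary M N X \<longleftrightarrow>
     (\<forall>v. fst v < N \<longrightarrow> X v \<in> borel_measurable M \<and> integrable M (\<lambda>\<omega>. (X v \<omega>)\<^sup>2)) \<and>
     (\<forall>i<N. \<forall>t. (\<integral>\<omega>. X (i, t) \<omega> \<partial>M) = (\<integral>\<omega>. X (i, 0) \<omega> \<partial>M)) \<and>
     (\<forall>i<N. \<forall>j<N. \<forall>t h. (\<integral>\<omega>. X (i, t + h) \<omega> * X (j, t) \<omega> \<partial>M) = (\<integral>\<omega>. X (i, h) \<omega> * X (j, 0) \<omega> \<partial>M))"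

definition stationary_VAR :: "'a measure \<Rightarrow> nat \<Rightarrow> nat \<Rightarrow> (nat \<Rightarrow> nat \<Rightarrow> nat \<Rightarrow> real)
    \<Rightarrow> (node \<Rightarrow> 'a \<Rightarrow> real) \<Rightarrow> (node \<Rightarrow> 'a \<Rightarrow> real) \<Rightarrow> bool" where
  "stationary_VAR M N p Phi X eta \<longleftrightarrow>
     prob_space M \<and> var_stable N p Phi \<and> gaussian_white_noise M N eta \<and> weakly_stationary M N X \<and>
     (\<forall>v. fst v < N \<longrightarrow> (AE \<omega> in M. X v \<omega> = var_rhs N p Phi (\<lambda>u. X u \<omega>) v + eta v \<omega>))"

text \<open>Xi is (a version of) the process after the intervention do(Xs(l)) := x l, l < length Xs:
  the equations of the intervened nodes are replaced by constants, all other
  equations and the noise are unchanged; among the solutions of the modified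
  system we take the (unique) one with bounded second moments.\<close>
definition intervened_process :: "'a measure \<Rightarrow> nat \<Rightarrow> nat \<Rightarrow> (nat \<Rightarrow> nat \<Rightarrow> nat \<Rightarrow> real)
    \<Rightarrow> (node \<Rightarrow> 'a \<Rightarrow> real) \<Rightarrow> node list \<Rightarrow> (nat \<Rightarrow> real) \<Rightarrow> (node \<Rightarrow> 'a \<Rightarrow> real) \<Rightarrow> bool" where
  "intervened_process M N p Phi eta Xs x Xi \<longleftrightarrow>
     (\<forall>v. fst v < N \<longrightarrow> Xi v \<in> borel_measurable M \<and> integrable M (\<lambda>\<omega>. (Xi v \<omega>)\<^sup>2)) \<and>
     (\<exists>B. \<forall>v. fst v < N \<longrightarrow> (\<integral>\<omega>. (Xi v \<omega>)\<^sup>2 \<partial>M) \<le> B) \<and>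
     (\<forall>l<length Xs. \<forall>\<omega>\<in>space M. Xi (Xs ! l) \<omega> = x l) \<and>
     (\<forall>v. fst v < N \<longrightarrow> v \<notin> set Xs \<longrightarrow> (AE \<omega> in M. Xi v \<omega> = var_rhs N p Phi (\<lambda>u. Xi u \<omega>) v + eta v \<omega>))"

end

(*
  In companion form the VAR(p) recursion becomes a first-order recursion whose matrix has all
  eigenvalues inside the unit disc, because det(I - sum_s z^s Phi(s)) has no root with |z| <= 1;
  so its powers decay geometrically. Every X(v), hence every residual
  X(Y) - sum_l theta_l X(x_l), is an L1-limit of finite combinations of the independent Gaussian
  noise and therefore Gaussian (a limit of centred normal characteristic functions is again
  centred normal). And a solution of the homogeneous recursion that is bounded in L1 vanishes;
  applied to the constant means of X this gives E X = 0.

  Splitting off the last edge of a proper path shows that theta(., x_l, .), extended to the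
  intervened set by the unit intervention at x_l, satisfies the homogeneous recursion outside
  the intervened set. Hence X + sum_l theta(., x_l, .) (x_l - X(x_l)) solves the intervened
  system. It is the only solution with bounded second moments: the difference of two solutions
  vanishes before the earliest intervention and then, step by step in time, everywhere.
  Taking expectations gives the causal effect Theta x.
*)
theory Submission
  imports Defs "Jordan_Normal_Form.Spectral_Radius"
begin

section \<open>Companion form of the VAR recursion\<close>

lemma sum_lessThan_mult_blocks:
  fixes g :: "nat \<Rightarrow> 'b::comm_monoid_add"
  shows "(\<Sum>b<N*p. g b) = (\<Sum>r<p. \<Sum>j<N. g (r*N + j))"
proof -
  have "(\<Sum>j<N. g (r*N + j)) = sum g {r*N..<r*N + N}" for r
    using sum.shift_bounds_nat_ivl[of g 0 "r*N" N] by (simp add: lessThan_atLeast0 add.commute)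
  then show ?thesis by (simp add: sum.nat_group mult.commute)
qed

lemma block_index_lt:
  fixes r p j N :: nat
  assumes "r < p" "j < N"
  shows "r*N + j < N*p"
proof -
  have "r*N + j < (r+1)*N" using assms by simp
  also have "\<dots> \<le> p*N" using assms by (intro mult_right_mono) auto
  finally show ?thesis by (simp add: mult.commute)
qed

lemma block_index_pred:
  fixes a N :: nat
  assumes "N \<le> a" "0 < N"
  shows "(a - N) mod N = a mod N" "a div N = Suc ((a - N) div N)"
proof -
  show "(a - N) mod N = a mod N" using assms by (simp add: le_mod_geq)
  have "a div N = (a - N + N) div N" using assms by simp
  also have "\<dots> = Suc ((a - N) div N)" using \<open>N > 0\<close> by simp
  finally show "a div N = Suc ((a - N) div N)" .
qed

lemma var_rhs_lessThan:
  "var_rhs N p Phi f v = (\<Sum>r<p. \<Sum>j<N. Phi (r+1) (fst v) j * f (j, snd v - int (r+1)))"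
  unfolding var_rhs_def image_Suc_lessThan[symmetric] by (simp add: sum.reindex)

text \<open>Block \<open>r < p\<close> of the stacked state at time \<open>t\<close> (indices \<open>r*N ..< r*N + N\<close>) holds the
  values at time \<open>t - r\<close>; in block form the companion matrix is
  \<open>[[Phi(1), ..., Phi(p)], [I, 0, ..., 0], ..., [0, ..., I, 0]]\<close>.\<close>

definition companion_mat :: "nat \<Rightarrow> nat \<Rightarrow> (nat \<Rightarrow> nat \<Rightarrow> nat \<Rightarrow> real) \<Rightarrow> real mat" where
  "companion_mat N p Phi = mat (N*p) (N*p) (\<lambda>(a, b). if a < N then Phi (b div N + 1) a (b mod N)
      else if b + N = a then 1 else 0)"

definition stacked_state :: "nat \<Rightarrow> nat \<Rightarrow> (node \<Rightarrow> real) \<Rightarrow> int \<Rightarrow> real vec" where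
  "stacked_state N p f t = vec (N*p) (\<lambda>a. f (a mod N, t - int (a div N)))"

definition stacked_innovation :: "nat \<Rightarrow> nat \<Rightarrow> (node \<Rightarrow> real) \<Rightarrow> int \<Rightarrow> real vec" where
  "stacked_innovation N p e t = vec (N*p) (\<lambda>a. if a < N then e (a, t) else 0)"

definition ma_part :: "nat \<Rightarrow> nat \<Rightarrow> (nat \<Rightarrow> nat \<Rightarrow> nat \<Rightarrow> real) \<Rightarrow> (node \<Rightarrow> real) \<Rightarrow> int \<Rightarrow> nat \<Rightarrow> real vec" where
  "ma_part N p Phi e t k =
     vec (N*p) (\<lambda>a. \<Sum>j<k. \<Sum>b<N. (companion_mat N p Phi ^\<^sub>m j) $$ (a, b) * e (b, t - int j))"

lemma companion_mat_carrier [simp]: "companion_mat N p Phi \<in> carrier_mat (N*p) (N*p)"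
  by (simp add: companion_mat_def)

lemma dim_companion_mat [simp]:
  "dim_row (companion_mat N p Phi) = N*p" "dim_col (companion_mat N p Phi) = N*p"
  by (simp_all add: companion_mat_def)

lemma companion_mat_first_block:
  assumes "a < N" "r < p" "j < N"
  shows "companion_mat N p Phi $$ (a, r*N + j) = Phi (r+1) a j"
proof -
  have "N \<le> N*p" using assms(2) by (cases p) auto
  then have "a < N*p" using assms(1) by linarith
  moreover have "(r*N + j) div N = r" "(r*N + j) mod N = j" using assms by auto
  ultimately show ?thesis using assms block_index_lt[of r p j N] by (simp add: companion_mat_def)
qed

lemma companion_mat_shift_row:
  fixes g :: "nat \<Rightarrow> 'a::real_algebra_1"
  assumes "a < N*p" "\<not> a < N"
  shows "(\<Sum>b<N*p. of_real (companion_mat N p Phi $$ (a, b)) * g b) = g (a - N)"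
proof -
  have "(\<Sum>b<N*p. of_real (companion_mat N p Phi $$ (a, b)) * g b) = (\<Sum>b<N*p. if b = a - N then g b else 0)"
    by (intro sum.cong refl) (use assms in \<open>auto simp: companion_mat_def\<close>)
  also have "\<dots> = g (a - N)" using assms by (simp add: less_imp_diff_less)
  finally show ?thesis .
qed

lemma companion_mat_top_row:
  assumes "a < N"
  shows "(\<Sum>b<N*p. companion_mat N p Phi $$ (a, b) * g (b mod N) (b div N))
       = (\<Sum>r<p. \<Sum>j<N. Phi (r+1) a j * g j r)"
  unfolding sum_lessThan_mult_blocks
  by (intro sum.cong refl) (simp add: companion_mat_first_block assms)

lemma stacked_state_step:
  assumes "\<And>i. i < N \<Longrightarrow> f (i, t) = var_rhs N p Phi f (i, t) + e (i, t)"
  shows "stacked_state N p f t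
       = companion_mat N p Phi *\<^sub>v stacked_state N p f (t - 1) + stacked_innovation N p e t"
proof (rule eq_vecI)
  fix a assume "a < dim_vec (companion_mat N p Phi *\<^sub>v stacked_state N p f (t - 1) + stacked_innovation N p e t)"
  then have a: "a < N*p" by (simp add: stacked_innovation_def)
  have prod: "(companion_mat N p Phi *\<^sub>v stacked_state N p f (t - 1)) $ a =
     (\<Sum>b<N*p. companion_mat N p Phi $$ (a, b) * f (b mod N, t - 1 - int (b div N)))"
    using a by (simp add: stacked_state_def scalar_prod_def lessThan_atLeast0)
  show "stacked_state N p f t $ a = (companion_mat N p Phi *\<^sub>v stacked_state N p f (t - 1) + stacked_innovation N p e t) $ a"
  proof (cases "a < N")
    case True
    have "(\<Sum>b<N*p. companion_mat N p Phi $$ (a, b) * f (b mod N, t - 1 - int (b div N)))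
        = var_rhs N p Phi f (a, t)"
      using companion_mat_top_row[OF True, of p Phi "\<lambda>j r. f (j, t - 1 - int r)"]
      by (simp add: var_rhs_lessThan algebra_simps)
    then show ?thesis using True a prod assms[OF True] by (simp add: stacked_state_def stacked_innovation_def)
  next
    case False
    have "(\<Sum>b<N*p. companion_mat N p Phi $$ (a, b) * f (b mod N, t - 1 - int (b div N)))
        = f (a mod N, t - int (a div N))"
    proof -
      have "N > 0" using a by (cases N) auto
      then show ?thesis
        using companion_mat_shift_row[OF a False, of Phi "\<lambda>b. f (b mod N, t - 1 - int (b div N))"]
          block_index_pred[of N a] False by (simp add: diff_diff_eq)
    qed
    then show ?thesis using False a prod by (simp add: stacked_state_def stacked_innovation_def)
  qed
qed (simp add: stacked_state_def stacked_innovation_def)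

lemma ma_part_Suc:
  "ma_part N p Phi e t (Suc k)
     = (companion_mat N p Phi ^\<^sub>m k) *\<^sub>v stacked_innovation N p e (t - int k) + ma_part N p Phi e t k"
proof (rule eq_vecI)
  let ?A = "companion_mat N p Phi"
  fix a assume "a < dim_vec ((?A ^\<^sub>m k) *\<^sub>v stacked_innovation N p e (t - int k) + ma_part N p Phi e t k)"
  then have a: "a < N*p" by (simp add: ma_part_def)
  then have "N \<le> N*p" by (cases p) auto
  have "((?A ^\<^sub>m k) *\<^sub>v stacked_innovation N p e (t - int k)) $ a
      = (\<Sum>b<N*p. (?A ^\<^sub>m k) $$ (a, b) * (if b < N then e (b, t - int k) else 0))"
    using a by (simp add: scalar_prod_def stacked_innovation_def lessThan_atLeast0)
  also have "\<dots> = (\<Sum>b<N. (?A ^\<^sub>m k) $$ (a, b) * e (b, t - int k))"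
    using \<open>N \<le> N*p\<close> by (intro sum.mono_neutral_cong_right) auto
  finally show "ma_part N p Phi e t (Suc k) $ a
      = ((?A ^\<^sub>m k) *\<^sub>v stacked_innovation N p e (t - int k) + ma_part N p Phi e t k) $ a"
    using a by (simp add: ma_part_def)
qed (simp add: ma_part_def)

lemma stacked_state_iterate:
  assumes "\<And>i s. i < N \<Longrightarrow> t - int k < s \<Longrightarrow> s \<le> t \<Longrightarrow> f (i, s) = var_rhs N p Phi f (i, s) + e (i, s)"
  shows "stacked_state N p f t
       = (companion_mat N p Phi ^\<^sub>m k) *\<^sub>v stacked_state N p f (t - int k) + ma_part N p Phi e t k"
  using assms
proof (induct k)
  case 0
  have "stacked_state N p f t \<in> carrier_vec (N*p)" by (simp add: stacked_state_def)
  moreover have "ma_part N p Phi e t 0 = 0\<^sub>v (N*p)" by (simp add: ma_part_def zero_vec_def)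
  ultimately show ?case by simp
next
  case (Suc k)
  let ?A = "companion_mat N p Phi" and ?x = "stacked_state N p f" and ?e = "stacked_innovation N p e"
  have Ak: "?A ^\<^sub>m k \<in> carrier_mat (N*p) (N*p)" by simp
  have x: "?x s \<in> carrier_vec (N*p)" and e: "?e s \<in> carrier_vec (N*p)"
    and m: "ma_part N p Phi e t j \<in> carrier_vec (N*p)" for s j
    by (simp_all add: stacked_state_def stacked_innovation_def ma_part_def)
  have step: "?x (t - int k) = ?A *\<^sub>v ?x (t - int k - 1) + ?e (t - int k)"
    by (rule stacked_state_step) (use Suc.prems in auto)
  have "(?A ^\<^sub>m k) *\<^sub>v ?x (t - int k)
      = (?A ^\<^sub>m Suc k) *\<^sub>v ?x (t - int (Suc k)) + (?A ^\<^sub>m k) *\<^sub>v ?e (t - int k)"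
    unfolding step mult_add_distrib_mat_vec[OF Ak mult_mat_vec_carrier[OF companion_mat_carrier x] e]
    by (simp add: assoc_mult_mat_vec[OF Ak companion_mat_carrier x, symmetric] algebra_simps)
  moreover have "?x t = (?A ^\<^sub>m k) *\<^sub>v ?x (t - int k) + ma_part N p Phi e t k"
    using Suc by auto
  ultimately have "?x t = ((?A ^\<^sub>m Suc k) *\<^sub>v ?x (t - int (Suc k)) + (?A ^\<^sub>m k) *\<^sub>v ?e (t - int k))
      + ma_part N p Phi e t k"
    by simp
  also have "\<dots> = (?A ^\<^sub>m Suc k) *\<^sub>v ?x (t - int (Suc k))
      + ((?A ^\<^sub>m k) *\<^sub>v ?e (t - int k) + ma_part N p Phi e t k)"
    by (rule assoc_add_vec) (auto intro!: carrier_vecI simp: ma_part_def)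
  finally show ?case by (simp add: ma_part_Suc)
qed

lemma var_unroll:
  assumes "\<And>i s. i < N \<Longrightarrow> t - int k < s \<Longrightarrow> s \<le> t \<Longrightarrow> f (i, s) = var_rhs N p Phi f (i, s) + e (i, s)"
    and "i < N" and "1 \<le> p"
  shows "f (i, t) = (\<Sum>b<N*p. (companion_mat N p Phi ^\<^sub>m k) $$ (i, b) * f (b mod N, t - int k - int (b div N)))
     + (\<Sum>j<k. \<Sum>b<N. (companion_mat N p Phi ^\<^sub>m j) $$ (i, b) * e (b, t - int j))"
proof -
  have i: "i < N*p" using assms(2,3) by (metis less_le_trans mult.right_neutral mult_le_mono2)
  have "f (i, t) = stacked_state N p f t $ i" using i assms(2) by (simp add: stacked_state_def)
  also have "\<dots> = ((companion_mat N p Phi ^\<^sub>m k) *\<^sub>v stacked_state N p f (t - int k) + ma_part N p Phi e t k) $ i"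
    using stacked_state_iterate[OF assms(1)] by simp
  finally show ?thesis
    using i by (simp add: ma_part_def stacked_state_def scalar_prod_def lessThan_atLeast0)
qed

section \<open>Stability and geometric decay\<close>

lemma pow_mat_smult:
  fixes x :: "'a :: comm_ring_1"
  assumes "A \<in> carrier_mat n n"
  shows "(x \<cdot>\<^sub>m A) ^\<^sub>m k = x ^ k \<cdot>\<^sub>m (A ^\<^sub>m k)"
proof (induct k)
  case 0 then show ?case using assms by (auto intro!: eq_matI)
next
  case (Suc k)
  have "(x \<cdot>\<^sub>m A) ^\<^sub>m Suc k = x ^ k \<cdot>\<^sub>m ((A ^\<^sub>m k) * (x \<cdot>\<^sub>m A))"
    using Suc assms by (simp add: mult_smult_assoc_mat[of _ n n _ n])
  also have "(A ^\<^sub>m k) * (x \<cdot>\<^sub>m A) = x \<cdot>\<^sub>m ((A ^\<^sub>m k) * A)"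
    using assms by (simp add: mult_smult_distrib[of _ n n _ n])
  finally show ?case using assms by (auto intro!: eq_matI simp: mult.assoc mult.commute)
qed

lemma spectral_radius_smult_lt_1:
  fixes B :: "complex mat"
  assumes B: "B \<in> carrier_mat n n" and n: "0 < n" and r: "0 < r"
    and lt: "spectral_radius (complex_of_real r \<cdot>\<^sub>m B) < r"
  shows "spectral_radius B < 1"
proof -
  let ?A = "complex_of_real r \<cdot>\<^sub>m B"
  have A: "?A \<in> carrier_mat n n" using B by simp
  obtain \<mu> w where w: "eigenvector B w \<mu>" "spectral_radius B = cmod \<mu>"
    using spectral_radius_mem_max(1)[OF B n] by (auto simp: spectrum_def eigenvalue_def)
  have wc: "w \<in> carrier_vec n" using w B by (auto simp: eigenvector_def)
  have "?A *\<^sub>v w = complex_of_real r \<cdot>\<^sub>v (B *\<^sub>v w)"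
    using B wc by (auto intro!: eq_vecI simp: scalar_prod_def algebra_simps sum_distrib_left)
  also have "B *\<^sub>v w = \<mu> \<cdot>\<^sub>v w" using w by (simp add: eigenvector_def)
  finally have "?A *\<^sub>v w = (complex_of_real r * \<mu>) \<cdot>\<^sub>v w" by (simp add: smult_smult_assoc)
  then have "eigenvalue ?A (complex_of_real r * \<mu>)"
    using w A B by (auto simp: eigenvalue_def eigenvector_def)
  then have "cmod (complex_of_real r * \<mu>) \<le> spectral_radius ?A"
    using spectral_radius_mem_max(2)[OF A n] by (auto simp: spectrum_def)
  then have "r * cmod \<mu> \<le> spectral_radius ?A" using r by (simp add: norm_mult)
  then have "r * cmod \<mu> < r * 1" using lt by linarith
  then show ?thesis using w r by simp
qed

lemma pow_mat_geometric_bound: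
  fixes A :: "complex mat"
  assumes A: "A \<in> carrier_mat n n" and ev: "\<And>l. eigenvalue A l \<Longrightarrow> cmod l < 1"
  shows "\<exists>c r. 0 \<le> c \<and> 0 < r \<and> r < 1 \<and> (\<forall>k. norm_bound (A ^\<^sub>m k) (c * r ^ k))"
proof (cases "n = 0")
  case True
  then show ?thesis using A by (intro exI[of _ 0] exI[of _ "1/2"]) (auto simp: norm_bound_def)
next
  case False
  then have n: "n > 0" by simp
  define \<rho> where "\<rho> = spectral_radius A"
  obtain l where l: "eigenvalue A l" "\<rho> = cmod l"
    using spectral_radius_mem_max(1)[OF A n] by (auto simp: \<rho>_def spectrum_def)
  define r where "r = (\<rho> + 1) / 2"
  have "0 \<le> \<rho>" "\<rho> < 1" using ev[OF l(1)] l(2) by auto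
  then have r: "0 < r" "r < 1" "\<rho> < r" by (auto simp: r_def)
  define B where "B = complex_of_real (1/r) \<cdot>\<^sub>m A"
  have B: "B \<in> carrier_mat n n" using A by (simp add: B_def)
  have AB: "A = complex_of_real r \<cdot>\<^sub>m B" using r A by (auto intro!: eq_matI simp: B_def)
  have "spectral_radius B < 1"
    using spectral_radius_smult_lt_1[OF B n r(1)] r(3) by (simp add: AB[symmetric] \<rho>_def)
  then obtain c where c: "\<And>k. norm_bound (B ^\<^sub>m k) c"
    using spectral_radius_jnf_norm_bound_less_1_upper_triangular[OF B] by auto
  have "\<forall>i<n. \<forall>j<n. cmod (if i = j then 1 else 0) \<le> c" using c[of 0] B unfolding norm_bound_def by simp
  then have "cmod (if (0::nat) = 0 then 1 else 0) \<le> c" using n by blast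
  then have "1 \<le> c" by simp
  moreover have "norm_bound (A ^\<^sub>m k) (c * r ^ k)" for k
  proof
    fix i j assume "i < dim_row (A ^\<^sub>m k)" "j < dim_col (A ^\<^sub>m k)"
    then have ij: "i < n" "j < n" using pow_carrier_mat[OF A, of k] by auto
    have "(A ^\<^sub>m k) $$ (i, j) = complex_of_real r ^ k * (B ^\<^sub>m k) $$ (i, j)"
      using ij B unfolding AB pow_mat_smult[OF B] by simp
    then have "norm ((A ^\<^sub>m k) $$ (i, j)) = r ^ k * norm ((B ^\<^sub>m k) $$ (i, j))"
      using r by (simp add: norm_mult norm_power)
    also have "\<dots> \<le> r ^ k * c" using c[of k] ij B r by (intro mult_left_mono) (auto simp: norm_bound_def)
    finally show "norm ((A ^\<^sub>m k) $$ (i, j)) \<le> c * r ^ k" by (simp add: mult.commute)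
  qed
  ultimately show ?thesis using r by (intro exI[of _ c] exI[of _ r]) auto
qed

definition var_char_mat :: "nat \<Rightarrow> nat \<Rightarrow> (nat \<Rightarrow> nat \<Rightarrow> nat \<Rightarrow> real) \<Rightarrow> complex \<Rightarrow> complex mat" where
  "var_char_mat N p Phi z = mat N N (\<lambda>(l, k). (if l = k then 1 else 0)
     - (\<Sum>s\<in>{1..p}. z ^ s * complex_of_real (Phi s l k)))"

lemma var_stable_iff:
  "var_stable N p Phi \<longleftrightarrow> (\<forall>z. cmod z \<le> 1 \<longrightarrow> Determinant.det (var_char_mat N p Phi z) \<noteq> 0)"
  by (simp add: var_stable_def var_char_mat_def)

lemma companion_eigenvector_blocks:
  fixes v :: "complex vec"
  assumes v: "v \<in> carrier_vec (N*p)" and ev: "map_mat complex_of_real (companion_mat N p Phi) *\<^sub>v v = l \<cdot>\<^sub>v v"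
    and l: "l \<noteq> 0" and a: "a < N*p"
  shows "v $ a = (1/l) ^ (a div N) * v $ (a mod N)"
  using a
proof (induct "a div N" arbitrary: a)
  case 0
  then have "a < N" by (cases "N = 0") (simp_all add: div_eq_0_iff)
  then show ?case by simp
next
  case (Suc q)
  have aN: "\<not> a < N" using Suc.hyps(2) div_less[of a N] by auto
  have N: "0 < N" using Suc.prems by (cases N) auto
  have q: "q = (a - N) div N" using block_index_pred(2)[of N a] aN N Suc.hyps(2) by simp
  have "l * v $ a = (map_mat complex_of_real (companion_mat N p Phi) *\<^sub>v v) $ a"
    using ev Suc.prems v by simp
  also have "\<dots> = (\<Sum>b<N*p. complex_of_real (companion_mat N p Phi $$ (a, b)) * v $ b)"
    using Suc.prems v by (simp add: scalar_prod_def lessThan_atLeast0)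
  also have "\<dots> = v $ (a - N)"
    using companion_mat_shift_row[OF Suc.prems aN, of Phi "\<lambda>b. v $ b"] by simp
  finally have "v $ a = (1/l) * v $ (a - N)" using l by (simp add: field_simps)
  also have "v $ (a - N) = (1/l) ^ q * v $ (a mod N)"
    using Suc.hyps(1)[OF q] Suc.prems block_index_pred(1)[of N a] aN N q by simp
  finally show ?case unfolding Suc.hyps(2)[symmetric] power_Suc mult.assoc .
qed

lemma var_char_mat_mult_vec:
  assumes u: "u \<in> carrier_vec N" and a: "a < N"
  shows "(var_char_mat N p Phi z *\<^sub>v u) $ a
       = u $ a - (\<Sum>s\<in>{1..p}. \<Sum>k<N. z ^ s * complex_of_real (Phi s a k) * u $ k)"
proof -
  have "(\<Sum>k<N. (if a = k then 1 else 0) * u $ k) = (\<Sum>k<N. if a = k then u $ k else 0)"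
    by (intro sum.cong) auto
  then have delta: "(\<Sum>k<N. (if a = k then 1 else 0) * u $ k) = u $ a" using a by simp
  have "(var_char_mat N p Phi z *\<^sub>v u) $ a
      = (\<Sum>k<N. (if a = k then 1 else 0) * u $ k)
        - (\<Sum>k<N. \<Sum>s\<in>{1..p}. z ^ s * complex_of_real (Phi s a k) * u $ k)"
    using u a by (simp add: var_char_mat_def scalar_prod_def lessThan_atLeast0 left_diff_distrib
      sum_subtractf sum_distrib_right)
  then show ?thesis
    unfolding delta using sum.swap[of "\<lambda>k s. z ^ s * complex_of_real (Phi s a k) * u $ k" "{1..p}" "{..<N}"]
    by simp
qed

lemma companion_eigenvector_top_block:
  fixes v :: "complex vec"
  assumes v: "v \<in> carrier_vec (N*p)" and ev: "map_mat complex_of_real (companion_mat N p Phi) *\<^sub>v v = l \<cdot>\<^sub>v v"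
    and l: "l \<noteq> 0" and a: "a < N" and p: "0 < p"
  shows "v $ a = (\<Sum>s\<in>{1..p}. \<Sum>j<N. (1/l) ^ s * complex_of_real (Phi s a j) * v $ j)"
proof -
  have aNp: "a < N*p" using a p by (cases p) auto
  have "l * v $ a = (\<Sum>b<N*p. complex_of_real (companion_mat N p Phi $$ (a, b)) * v $ b)"
    using v ev aNp by (auto simp: scalar_prod_def lessThan_atLeast0 dest: arg_cong[where f="\<lambda>w. w $ a"])
  also have "\<dots> = (\<Sum>r<p. \<Sum>j<N. complex_of_real (Phi (r+1) a j) * ((1/l) ^ r * v $ j))"
  proof -
    have "v $ (r*N + j) = (1/l) ^ r * v $ j" if "r < p" "j < N" for r j
      using companion_eigenvector_blocks[OF v ev l block_index_lt[OF that]] that by simp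
    then show ?thesis
      unfolding sum_lessThan_mult_blocks by (intro sum.cong refl) (simp add: companion_mat_first_block a)
  qed
  finally have "v $ a = (1/l) * (\<Sum>r<p. \<Sum>j<N. complex_of_real (Phi (r+1) a j) * ((1/l) ^ r * v $ j))"
    using l by (simp add: field_simps)
  also have "\<dots> = (\<Sum>r<p. \<Sum>j<N. (1/l) ^ (r+1) * complex_of_real (Phi (r+1) a j) * v $ j)"
    by (simp add: sum_distrib_left algebra_simps)
  also have "\<dots> = (\<Sum>s\<in>{1..p}. \<Sum>j<N. (1/l) ^ s * complex_of_real (Phi s a j) * v $ j)"
    unfolding image_Suc_lessThan[symmetric] by (simp add: sum.reindex)
  finally show ?thesis .
qed

lemma companion_eigenvalue_char_mat_singular:
  assumes ev: "eigenvalue (map_mat complex_of_real (companion_mat N p Phi)) l" and l: "l \<noteq> 0"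
  shows "Determinant.det (var_char_mat N p Phi (1/l)) = 0"
proof -
  obtain v where v: "v \<in> carrier_vec (N*p)" "v \<noteq> 0\<^sub>v (N*p)"
      "map_mat complex_of_real (companion_mat N p Phi) *\<^sub>v v = l \<cdot>\<^sub>v v"
    using ev unfolding eigenvalue_def eigenvector_def by auto
  have p: "0 < p" using v(1,2) by (cases p) (auto intro!: eq_vecI)
  define u where "u = vec N (\<lambda>j. v $ j)"
  have u: "u \<in> carrier_vec N" by (simp add: u_def)
  have "u \<noteq> 0\<^sub>v N"
  proof
    assume "u = 0\<^sub>v N"
    then have "v $ j = 0" if "j < N" for j using that unfolding u_def by (metis index_vec index_zero_vec(1))
    then have "v $ a = 0" if "a < N*p" for a
      using companion_eigenvector_blocks[OF v(1,3) l that] that by (cases "N = 0") auto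
    then show False using v(1,2) by (auto intro!: eq_vecI)
  qed
  moreover have "var_char_mat N p Phi (1/l) *\<^sub>v u = 0\<^sub>v N"
  proof (rule eq_vecI)
    fix a assume "a < dim_vec (0\<^sub>v N :: complex vec)"
    then have a: "a < N" by simp
    then show "(var_char_mat N p Phi (1/l) *\<^sub>v u) $ a = 0\<^sub>v N $ a"
      using var_char_mat_mult_vec[OF u a] companion_eigenvector_top_block[OF v(1,3) l a p]
      by (simp add: u_def)
  qed (simp add: var_char_mat_def)
  ultimately show ?thesis
    using u by (subst det_0_iff_vec_prod_zero_field[of _ N]) (auto simp: var_char_mat_def)
qed

lemma companion_eigenvalue_lt_1:
  assumes "var_stable N p Phi" and "eigenvalue (map_mat complex_of_real (companion_mat N p Phi)) l"
  shows "cmod l < 1"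
proof (rule ccontr)
  assume "\<not> cmod l < 1"
  then have "l \<noteq> 0" "cmod (1/l) \<le> 1" by (auto simp: norm_divide divide_le_eq_1)
  then show False
    using assms companion_eigenvalue_char_mat_singular[OF assms(2)] by (auto simp: var_stable_iff)
qed

lemma companion_pow_decay:
  assumes "var_stable N p Phi"
  obtains c r where "0 \<le> c" "0 < r" "r < 1"
    "\<And>k a b. a < N*p \<Longrightarrow> b < N*p \<Longrightarrow> \<bar>(companion_mat N p Phi ^\<^sub>m k) $$ (a, b)\<bar> \<le> c * r ^ k"
proof -
  let ?A = "companion_mat N p Phi"
  obtain c r where cr: "0 \<le> c" "0 < r" "r < 1"
    "\<And>k. norm_bound (map_mat complex_of_real ?A ^\<^sub>m k) (c * r ^ k)"
    using pow_mat_geometric_bound[of "map_mat complex_of_real ?A" "N*p"]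
      companion_eigenvalue_lt_1[OF assms] by auto
  have "\<bar>(?A ^\<^sub>m k) $$ (a, b)\<bar> \<le> c * r ^ k" if "a < N*p" "b < N*p" for k a b
  proof -
    have "map_mat complex_of_real ?A ^\<^sub>m k = map_mat complex_of_real (?A ^\<^sub>m k)"
      by (rule of_real_hom.mat_hom_pow[OF companion_mat_carrier, symmetric])
    then show ?thesis using cr(4)[of k] that unfolding norm_bound_def by auto
  qed
  with cr(1-3) show thesis by (rule that)
qed

section \<open>Limits of Gaussian noise combinations\<close>

lemma distr_borel_lborel: "distr M borel f = distr M lborel f"
  by (rule distr_cong) auto

lemma norm_iexp_diff_le: "cmod (iexp a - iexp b) \<le> \<bar>a - b\<bar>"
proof -
  have "iexp a - iexp b = iexp b * (iexp (a - b) - 1)"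
    by (simp add: algebra_simps exp_add[symmetric])
  then have "cmod (iexp a - iexp b) = cmod (iexp (a - b) - 1)" by (simp add: norm_mult)
  also have "\<dots> = 2 * \<bar>sin ((a - b) / 2)\<bar>" by (rule dist_exp_i_1)
  also have "\<dots> \<le> \<bar>a - b\<bar>" using abs_sin_x_le_abs_x[of "(a - b) / 2"] by simp
  finally show ?thesis .
qed

lemma char_not_zero_off_origin:
  assumes \<mu>: "real_distribution \<mu>"
  shows "\<not> (\<forall>t. t \<noteq> 0 \<longrightarrow> char \<mu> t = 0)"
proof
  assume zero: "\<forall>t. t \<noteq> 0 \<longrightarrow> char \<mu> t = 0"
  have "(\<lambda>m. char \<mu> (inverse (real (Suc m)))) \<longlonglongrightarrow> char \<mu> 0"
    by (rule isCont_tendsto_compose[OF real_distribution.isCont_char[OF \<mu>] LIMSEQ_inverse_real_of_nat])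
  then have "char \<mu> 0 = 0" by (simp add: zero LIMSEQ_const_iff)
  then show False by (simp add: real_distribution.char_zero[OF \<mu>])
qed

lemma char_centered_normal_limit:
  assumes \<mu>: "real_distribution \<mu>"
    and lim: "\<And>t. (\<lambda>k. complex_of_real (exp (- (s k * t)\<^sup>2 / 2))) \<longlonglongrightarrow> char \<mu> t"
  obtains \<sigma> where "0 \<le> \<sigma>" "\<And>t. char \<mu> t = complex_of_real (exp (- (\<sigma> * t)\<^sup>2 / 2))"
proof -
  define L where "L k = exp (- (s k)\<^sup>2 / 2)" for k
  have L: "0 < L k" "L k \<le> 1" for k by (simp_all add: L_def)
  have powr_L: "exp (- (s k * t)\<^sup>2 / 2) = L k powr t\<^sup>2" for k t
    using L(1)[of k] by (simp add: powr_def L_def power_mult_distrib)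
  have lim_powr: "(\<lambda>k. complex_of_real (L k powr t\<^sup>2)) \<longlonglongrightarrow> char \<mu> t" for t
    using lim[of t] by (simp only: powr_L)
  define l where "l = Re (char \<mu> 1)"
  have "(\<lambda>k. complex_of_real (L k)) \<longlonglongrightarrow> char \<mu> 1" using lim[of 1] by (simp add: L_def)
  from tendsto_Re[OF this] have Ll: "L \<longlonglongrightarrow> l" by (simp add: l_def)
  have l: "0 \<le> l" "l \<le> 1"
    by (rule LIMSEQ_le_const[OF Ll], use L(1) less_imp_le in blast, rule LIMSEQ_le_const2[OF Ll], use L(2) in blast)
  have "0 < l"
  proof (rule ccontr)
    assume "\<not> 0 < l"
    then have Ll0: "L \<longlonglongrightarrow> 0" using Ll l by simp
    have "char \<mu> t = 0" if "t \<noteq> 0" for t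
    proof -
      have "(\<lambda>k. L k powr t\<^sup>2) \<longlonglongrightarrow> 0"
        by (rule tendsto_zero_powrI[OF Ll0 tendsto_const])
          (use L(1) that in \<open>auto intro: always_eventually less_imp_le\<close>)
      then have "(\<lambda>k. complex_of_real (L k powr t\<^sup>2)) \<longlonglongrightarrow> 0"
        using tendsto_of_real by fastforce
      then show ?thesis using lim_powr[of t] LIMSEQ_unique by blast
    qed
    then show False using char_not_zero_off_origin[OF \<mu>] by blast
  qed
  have char_l: "char \<mu> t = complex_of_real (l powr t\<^sup>2)" for t
  proof -
    have "(\<lambda>k. L k powr t\<^sup>2) \<longlonglongrightarrow> l powr t\<^sup>2"
      by (rule tendsto_powr[OF Ll tendsto_const]) (use \<open>0 < l\<close> in simp)
    then show ?thesis using tendsto_of_real lim_powr[of t] LIMSEQ_unique by blast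
  qed
  define \<sigma> where "\<sigma> = sqrt (- 2 * ln l)"
  have "\<sigma>\<^sup>2 = - 2 * ln l" using l \<open>0 < l\<close> by (simp add: \<sigma>_def)
  then have "l powr t\<^sup>2 = exp (- (\<sigma> * t)\<^sup>2 / 2)" for t
    using \<open>0 < l\<close> by (simp add: powr_def power_mult_distrib)
  moreover have "ln l \<le> 0" using l(2) \<open>0 < l\<close> by simp
  ultimately show thesis using that[of \<sigma>] by (simp add: \<sigma>_def char_l)
qed

context prob_space
begin

lemma char_centered_normal:
  assumes Y: "distributed M lborel Y (normal_density 0 s)" and s: "0 < s"
  shows "char (distr M borel Y) t = complex_of_real (exp (- (s * t)\<^sup>2 / 2))"
proof -
  have Ym: "Y \<in> borel_measurable M" using distributed_measurable[OF Y] by simp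
  have "distributed M lborel (\<lambda>x. (Y x - 0) / s) std_normal_density"
    using Y normal_standard_normal_convert[OF s] by simp
  then have std: "distr M borel (\<lambda>x. Y x / s) = std_normal_distribution"
    unfolding distributed_def distr_borel_lborel by simp
  have "char (distr M borel Y) t = (CLINT x|M. iexp (t * Y x))"
    using Ym by (simp add: char_def integral_distr)
  also have "\<dots> = (CLINT x|M. iexp ((t * s) * (Y x / s)))" using s by simp
  also have "\<dots> = char (distr M borel (\<lambda>x. Y x / s)) (t * s)"
    using Ym s by (simp add: char_def integral_distr)
  also have "\<dots> = complex_of_real (exp (- (s * t)\<^sup>2 / 2))"
    by (simp add: std char_std_normal_distribution mult.commute)
  finally show ?thesis .
qed

lemma norm_char_diff_le:
  assumes X: "X \<in> borel_measurable M" and Y: "Y \<in> borel_measurable M"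
    and int: "integrable M (\<lambda>\<omega>. \<bar>X \<omega> - Y \<omega>\<bar>)"
  shows "cmod (char (distr M borel X) t - char (distr M borel Y) t) \<le> \<bar>t\<bar> * (\<integral>\<omega>. \<bar>X \<omega> - Y \<omega>\<bar> \<partial>M)"
proof -
  have iX: "integrable M (\<lambda>x. iexp (t * X x))" by (rule integrable_const_bound[of _ 1]) (use X in auto)
  have iY: "integrable M (\<lambda>x. iexp (t * Y x))" by (rule integrable_const_bound[of _ 1]) (use Y in auto)
  have "char (distr M borel X) t - char (distr M borel Y) t
      = (CLINT x|M. iexp (t * X x)) - (CLINT x|M. iexp (t * Y x))"
    using X Y by (simp add: char_def integral_distr)
  also have "\<dots> = (CLINT x|M. iexp (t * X x) - iexp (t * Y x))"
    by (rule Bochner_Integration.integral_diff[OF iX iY, symmetric])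
  finally have "cmod (char (distr M borel X) t - char (distr M borel Y) t)
      \<le> (\<integral>x. cmod (iexp (t * X x) - iexp (t * Y x)) \<partial>M)"
    by (simp add: integral_norm_bound)
  also have "\<dots> \<le> (\<integral>x. \<bar>t\<bar> * \<bar>X x - Y x\<bar> \<partial>M)"
  proof (rule integral_mono)
    show "integrable M (\<lambda>x. cmod (iexp (t * X x) - iexp (t * Y x)))" using iX iY by auto
    show "integrable M (\<lambda>x. \<bar>t\<bar> * \<bar>X x - Y x\<bar>)" using int by auto
    show "cmod (iexp (t * X x) - iexp (t * Y x)) \<le> \<bar>t\<bar> * \<bar>X x - Y x\<bar>" for x
      using norm_iexp_diff_le[of "t * X x" "t * Y x"] by (simp add: abs_mult[symmetric] algebra_simps)
  qed
  finally show ?thesis by simp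
qed

text \<open>A centred normal law with \<open>\<sigma> = 0\<close> is the point mass at \<open>0\<close>, which \<^const>\<open>gaussian_rv\<close>
  admits as a degenerate Gaussian.\<close>

lemma gaussian_rv_char_centered_normal:
  assumes Z: "Z \<in> borel_measurable M" and \<sigma>: "0 \<le> \<sigma>"
    and char_Z: "\<And>t. char (distr M borel Z) t = complex_of_real (exp (- (\<sigma> * t)\<^sup>2 / 2))"
  shows "gaussian_rv M Z"
proof (cases "\<sigma> = 0")
  case False
  then have \<sigma>0: "0 < \<sigma>" using \<sigma> by simp
  define D where "D = density lborel (\<lambda>x. ennreal (normal_density 0 \<sigma> x))"
  have PD: "prob_space D" unfolding D_def by (rule prob_space_normal_density[OF \<sigma>0])
  have sD: "sets D = sets borel" by (simp add: D_def)
  have "distributed D lborel (\<lambda>x. x) (normal_density 0 \<sigma>)"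
    unfolding distributed_def using distr_id2[of lborel D] sD
    by (auto simp: D_def intro: measurable_ident_sets)
  then have "char (distr D borel (\<lambda>x. x)) t = complex_of_real (exp (- (\<sigma> * t)\<^sup>2 / 2))" for t
    by (rule prob_space.char_centered_normal[OF PD _ \<sigma>0])
  moreover have "distr D borel (\<lambda>x. x) = D" using distr_id2[of borel D] sD by simp
  ultimately have char_D: "char D t = complex_of_real (exp (- (\<sigma> * t)\<^sup>2 / 2))" for t by simp
  have "real_distribution D" using PD sD by (simp add: real_distribution_def real_distribution_axioms_def)
  then have "distr M borel Z = D"
    by (rule Levy_uniqueness[OF real_distribution_distr[OF Z]]) (simp add: fun_eq_iff char_Z char_D)
  then have "distributed M lborel Z (normal_density 0 \<sigma>)"
    unfolding distributed_def using Z by (simp add: D_def distr_borel_lborel)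
  then show ?thesis unfolding gaussian_rv_def using Z \<sigma>0 by blast
next
  case True
  define R where "R = return borel (0::real)"
  have char_R: "char R t = 1" for t
    unfolding char_def R_def by (subst integral_return) auto
  have "real_distribution R"
    by (simp add: R_def real_distribution_def real_distribution_axioms_def prob_space_return)
  then have distr_Z: "distr M borel Z = return borel 0"
    unfolding R_def[symmetric]
    by (rule Levy_uniqueness[OF real_distribution_distr[OF Z]]) (simp add: fun_eq_iff char_Z char_R True)
  have "AE x in return borel (0::real). x = 0" by (subst AE_return) auto
  then have "AE x in distr M borel Z. x = 0" by (simp only: distr_Z)
  then have "AE \<omega> in M. Z \<omega> = 0" by (rule AE_distrD[OF Z])
  then show ?thesis unfolding gaussian_rv_def using Z by blast
qed

end

definition noise_comb :: "(node \<Rightarrow> 'a \<Rightarrow> real) \<Rightarrow> node set \<Rightarrow> (node \<Rightarrow> real) \<Rightarrow> 'a \<Rightarrow> real" where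
  "noise_comb eta W c \<omega> = (\<Sum>w\<in>W. c w * eta w \<omega>)"

definition noise_limit :: "'a measure \<Rightarrow> nat \<Rightarrow> (node \<Rightarrow> 'a \<Rightarrow> real) \<Rightarrow> ('a \<Rightarrow> real) \<Rightarrow> bool" where
  "noise_limit M N eta Z \<longleftrightarrow> Z \<in> borel_measurable M \<and>
     (\<forall>\<epsilon>>0. \<exists>W c. finite W \<and> (\<forall>w\<in>W. fst w < N) \<and>
        integrable M (\<lambda>\<omega>. \<bar>Z \<omega> - noise_comb eta W c \<omega>\<bar>) \<and> (\<integral>\<omega>. \<bar>Z \<omega> - noise_comb eta W c \<omega>\<bar> \<partial>M) < \<epsilon>)"

lemma noise_comb_union:
  assumes "finite W1" "finite W2"
  shows "noise_comb eta (W1 \<union> W2) (\<lambda>w. (if w \<in> W1 then c1 w else 0) + (if w \<in> W2 then c2 w else 0)) \<omega>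
     = noise_comb eta W1 c1 \<omega> + noise_comb eta W2 c2 \<omega>"
proof -
  have restrict: "(\<Sum>w\<in>W1 \<union> W2. if w \<in> W then f w else 0) = (\<Sum>w\<in>W. f w)"
    if "W \<subseteq> W1 \<union> W2" for W and f :: "node \<Rightarrow> real"
    by (rule sum.mono_neutral_cong_right) (use assms that in auto)
  show ?thesis
    unfolding noise_comb_def distrib_right sum.distrib if_distrib[of "\<lambda>x. x * _"] mult_zero_left
    by (simp add: restrict)
qed

locale gaussian_noise = prob_space M for M :: "'a measure" +
  fixes N :: nat and eta :: "node \<Rightarrow> 'a \<Rightarrow> real"
  assumes white_noise: "gaussian_white_noise M N eta"
begin

lemma noise_measurable [measurable]:
  assumes "fst w < N"
  shows "eta w \<in> borel_measurable M"
proof -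
  obtain \<sigma> :: "nat \<Rightarrow> real" where
    "\<forall>v. fst v < N \<longrightarrow> distributed M lborel (eta v) (normal_density 0 (\<sigma> (fst v)))"
    using white_noise unfolding gaussian_white_noise_def by blast
  then show ?thesis using assms distributed_measurable by fastforce
qed

lemma noise_comb_measurable:
  assumes "\<forall>w\<in>W. fst w < N"
  shows "noise_comb eta W c \<in> borel_measurable M"
  using assms noise_measurable unfolding noise_comb_def[abs_def] by (auto intro!: borel_measurable_sum)

lemma char_noise_comb:
  assumes W: "finite W" "\<forall>w\<in>W. fst w < N"
  obtains s where "\<And>t. char (distr M borel (noise_comb eta W c)) t = complex_of_real (exp (- (s * t)\<^sup>2 / 2))"
proof -
  obtain \<sigma> where \<sigma>: "\<forall>i<N. 0 < \<sigma> i" "\<forall>v. fst v < N \<longrightarrow> distributed M lborel (eta v) (normal_density 0 (\<sigma> (fst v)))"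
    and ind: "indep_vars (\<lambda>_. borel) eta {v. fst v < N}"
    using white_noise unfolding gaussian_white_noise_def by blast
  define W' where "W' = {w\<in>W. c w \<noteq> 0}"
  have comb: "noise_comb eta W c = (\<lambda>\<omega>. \<Sum>w\<in>W'. c w * eta w \<omega>)"
    unfolding noise_comb_def[abs_def] by (intro ext sum.mono_neutral_cong_right) (auto simp: W'_def W)
  show thesis
  proof (cases "W' = {}")
    case True
    then show thesis
      using that[of 0] by (simp add: comb char_def integral_distr prob_space integral_return)
  next
    case False
    have fin: "finite W'" using W by (simp add: W'_def)
    have indW: "indep_vars (\<lambda>_. borel) (\<lambda>w \<omega>. c w * eta w \<omega>) W'"
      by (rule indep_vars_compose2[where X=eta and M'="\<lambda>_. borel", OF indep_vars_subset[OF ind]])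
        (use W in \<open>auto simp: W'_def\<close>)
    have pos: "0 < \<bar>c w\<bar> * \<sigma> (fst w)" if "w \<in> W'" for w
      using that \<sigma> W by (auto simp: W'_def)
    have "distributed M lborel (\<lambda>\<omega>. c w * eta w \<omega>) (normal_density 0 (\<bar>c w\<bar> * \<sigma> (fst w)))"
      if "w \<in> W'" for w
    proof -
      have w: "fst w < N" "c w \<noteq> 0" using that W by (auto simp: W'_def)
      then have "distributed M lborel (eta w) (normal_density 0 (\<sigma> (fst w)))" "0 < \<sigma> (fst w)" "c w \<noteq> 0"
        using \<sigma> by blast+
      from normal_density_affine[OF this, of 0] show ?thesis by simp
    qed
    then have "distributed M lborel (\<lambda>\<omega>. \<Sum>w\<in>W'. c w * eta w \<omega>)
        (normal_density 0 (sqrt (\<Sum>w\<in>W'. (\<bar>c w\<bar> * \<sigma> (fst w))\<^sup>2)))"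
      using sum_indep_normal[OF fin False indW, where \<sigma>="\<lambda>w. \<bar>c w\<bar> * \<sigma> (fst w)" and \<mu>="\<lambda>_. 0"] pos
      by simp
    moreover have "0 < sqrt (\<Sum>w\<in>W'. (\<bar>c w\<bar> * \<sigma> (fst w))\<^sup>2)"
      by (intro real_sqrt_gt_zero sum_pos fin False zero_less_power pos)
    ultimately show thesis using that char_centered_normal unfolding comb by blast
  qed
qed

lemma noise_limit_measurable: "noise_limit M N eta Z \<Longrightarrow> Z \<in> borel_measurable M"
  by (simp add: noise_limit_def)

lemma noise_limit_add:
  assumes Z1: "noise_limit M N eta Z1" and Z2: "noise_limit M N eta Z2"
  shows "noise_limit M N eta (\<lambda>\<omega>. Z1 \<omega> + Z2 \<omega>)"
  unfolding noise_limit_def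
proof (intro conjI allI impI)
  show "(\<lambda>\<omega>. Z1 \<omega> + Z2 \<omega>) \<in> borel_measurable M"
    using noise_limit_measurable[OF Z1] noise_limit_measurable[OF Z2] by simp
  fix \<epsilon> :: real assume "\<epsilon> > 0"
  then have "\<epsilon>/2 > 0" by simp
  then obtain W1 c1 where W1: "finite W1" "\<forall>w\<in>W1. fst w < N"
      "integrable M (\<lambda>\<omega>. \<bar>Z1 \<omega> - noise_comb eta W1 c1 \<omega>\<bar>)" "(\<integral>\<omega>. \<bar>Z1 \<omega> - noise_comb eta W1 c1 \<omega>\<bar> \<partial>M) < \<epsilon>/2"
    using Z1 unfolding noise_limit_def by blast
  obtain W2 c2 where W2: "finite W2" "\<forall>w\<in>W2. fst w < N"
      "integrable M (\<lambda>\<omega>. \<bar>Z2 \<omega> - noise_comb eta W2 c2 \<omega>\<bar>)" "(\<integral>\<omega>. \<bar>Z2 \<omega> - noise_comb eta W2 c2 \<omega>\<bar> \<partial>M) < \<epsilon>/2"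
    using Z2 \<open>\<epsilon>/2 > 0\<close> unfolding noise_limit_def by blast
  define c where "c w = (if w \<in> W1 then c1 w else 0) + (if w \<in> W2 then c2 w else 0)" for w
  define R where "R \<omega> = \<bar>Z1 \<omega> - noise_comb eta W1 c1 \<omega>\<bar> + \<bar>Z2 \<omega> - noise_comb eta W2 c2 \<omega>\<bar>" for \<omega>
  have W: "finite (W1 \<union> W2)" "\<forall>w\<in>W1 \<union> W2. fst w < N" using W1 W2 by auto
  have le: "\<bar>Z1 \<omega> + Z2 \<omega> - noise_comb eta (W1 \<union> W2) c \<omega>\<bar> \<le> R \<omega>" for \<omega>
    unfolding c_def[abs_def] R_def noise_comb_union[OF W1(1) W2(1)] by simp
  have R: "integrable M R" using W1(3) W2(3) by (simp add: R_def[abs_def])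
  have int: "integrable M (\<lambda>\<omega>. \<bar>Z1 \<omega> + Z2 \<omega> - noise_comb eta (W1 \<union> W2) c \<omega>\<bar>)"
    by (rule Bochner_Integration.integrable_bound[OF R])
      (use le noise_limit_measurable[OF Z1] noise_limit_measurable[OF Z2] noise_comb_measurable[OF W(2)]
        in \<open>auto intro!: AE_I2 order.trans[OF _ abs_ge_self]\<close>)
  have "(\<integral>\<omega>. \<bar>Z1 \<omega> + Z2 \<omega> - noise_comb eta (W1 \<union> W2) c \<omega>\<bar> \<partial>M) \<le> integral\<^sup>L M R"
    by (rule integral_mono[OF int R le])
  also have "\<dots> < \<epsilon>" using W1 W2 by (simp add: R_def[abs_def])
  finally show "\<exists>W c. finite W \<and> (\<forall>w\<in>W. fst w < N) \<and>
      integrable M (\<lambda>\<omega>. \<bar>Z1 \<omega> + Z2 \<omega> - noise_comb eta W c \<omega>\<bar>) \<and>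
      (\<integral>\<omega>. \<bar>Z1 \<omega> + Z2 \<omega> - noise_comb eta W c \<omega>\<bar> \<partial>M) < \<epsilon>"
    using W int by blast
qed

lemma noise_limit_cmult:
  assumes Z: "noise_limit M N eta Z"
  shows "noise_limit M N eta (\<lambda>\<omega>. a * Z \<omega>)"
  unfolding noise_limit_def
proof (intro conjI allI impI)
  show "(\<lambda>\<omega>. a * Z \<omega>) \<in> borel_measurable M" using noise_limit_measurable[OF Z] by simp
  fix \<epsilon> :: real assume "\<epsilon> > 0"
  then have "\<epsilon> / (\<bar>a\<bar> + 1) > 0" by simp
  then obtain W c where W: "finite W" "\<forall>w\<in>W. fst w < N" "integrable M (\<lambda>\<omega>. \<bar>Z \<omega> - noise_comb eta W c \<omega>\<bar>)"
    "(\<integral>\<omega>. \<bar>Z \<omega> - noise_comb eta W c \<omega>\<bar> \<partial>M) < \<epsilon> / (\<bar>a\<bar> + 1)"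
    using Z unfolding noise_limit_def by blast
  have eq: "\<bar>a * Z \<omega> - noise_comb eta W (\<lambda>w. a * c w) \<omega>\<bar> = \<bar>a\<bar> * \<bar>Z \<omega> - noise_comb eta W c \<omega>\<bar>" for \<omega>
    by (simp add: noise_comb_def sum_distrib_left mult.assoc abs_mult[symmetric] right_diff_distrib)
  have "\<bar>a\<bar> * (\<integral>\<omega>. \<bar>Z \<omega> - noise_comb eta W c \<omega>\<bar> \<partial>M) \<le> \<bar>a\<bar> * (\<epsilon> / (\<bar>a\<bar> + 1))"
    using W(4) by (intro mult_left_mono) auto
  also have "\<dots> < \<epsilon>" using \<open>\<epsilon> > 0\<close> by (simp add: field_simps)
  finally show "\<exists>W c. finite W \<and> (\<forall>w\<in>W. fst w < N) \<and>
      integrable M (\<lambda>\<omega>. \<bar>a * Z \<omega> - noise_comb eta W c \<omega>\<bar>) \<and> (\<integral>\<omega>. \<bar>a * Z \<omega> - noise_comb eta W c \<omega>\<bar> \<partial>M) < \<epsilon>"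
    using W(1-3) by (intro exI[of _ W] exI[of _ "\<lambda>w. a * c w"]) (simp add: eq)
qed

lemma noise_limit_sum:
  assumes "finite I" and "\<And>i. i \<in> I \<Longrightarrow> noise_limit M N eta (Z i)"
  shows "noise_limit M N eta (\<lambda>\<omega>. \<Sum>i\<in>I. Z i \<omega>)"
  using assms
proof (induct I rule: finite_induct)
  case empty
  then show ?case
    unfolding noise_limit_def by (auto intro!: exI[of _ "{}"] simp: noise_comb_def)
next
  case (insert i I)
  then show ?case using noise_limit_add[of "Z i" "\<lambda>\<omega>. \<Sum>i\<in>I. Z i \<omega>"] by simp
qed

lemma noise_limit_cong_AE:
  assumes Z: "noise_limit M N eta Z" and "Z' \<in> borel_measurable M" and ae: "AE \<omega> in M. Z \<omega> = Z' \<omega>"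
  shows "noise_limit M N eta Z'"
  unfolding noise_limit_def
proof (intro conjI allI impI)
  fix \<epsilon> :: real assume "\<epsilon> > 0"
  then obtain W c where W: "finite W" "\<forall>w\<in>W. fst w < N" "integrable M (\<lambda>\<omega>. \<bar>Z \<omega> - noise_comb eta W c \<omega>\<bar>)"
    "(\<integral>\<omega>. \<bar>Z \<omega> - noise_comb eta W c \<omega>\<bar> \<partial>M) < \<epsilon>"
    using Z unfolding noise_limit_def by blast
  have ae': "AE \<omega> in M. \<bar>Z \<omega> - noise_comb eta W c \<omega>\<bar> = \<bar>Z' \<omega> - noise_comb eta W c \<omega>\<bar>"
    using ae by auto
  have m: "(\<lambda>\<omega>. \<bar>Z' \<omega> - noise_comb eta W c \<omega>\<bar>) \<in> borel_measurable M"
    using assms(2) noise_comb_measurable[OF W(2)] by simp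
  have "integrable M (\<lambda>\<omega>. \<bar>Z' \<omega> - noise_comb eta W c \<omega>\<bar>)"
    by (rule integrable_cong_AE_imp[OF W(3) m ae'])
  moreover have "(\<integral>\<omega>. \<bar>Z' \<omega> - noise_comb eta W c \<omega>\<bar> \<partial>M) = (\<integral>\<omega>. \<bar>Z \<omega> - noise_comb eta W c \<omega>\<bar> \<partial>M)"
    by (rule integral_cong_AE) (use m W(3) ae' in auto)
  ultimately show "\<exists>W c. finite W \<and> (\<forall>w\<in>W. fst w < N) \<and>
      integrable M (\<lambda>\<omega>. \<bar>Z' \<omega> - noise_comb eta W c \<omega>\<bar>) \<and> (\<integral>\<omega>. \<bar>Z' \<omega> - noise_comb eta W c \<omega>\<bar> \<partial>M) < \<epsilon>"
    using W by (intro exI[of _ W] exI[of _ c]) simp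
qed (rule assms(2))

lemma noise_limit_noise:
  assumes "fst v < N"
  shows "noise_limit M N eta (eta v)"
  unfolding noise_limit_def
proof (intro conjI allI impI)
  show "eta v \<in> borel_measurable M" using assms by (rule noise_measurable)
  fix \<epsilon> :: real assume "\<epsilon> > 0"
  moreover have "noise_comb eta {v} (\<lambda>_. 1) = eta v" by (simp add: noise_comb_def[abs_def])
  ultimately show "\<exists>W c. finite W \<and> (\<forall>w\<in>W. fst w < N) \<and>
      integrable M (\<lambda>\<omega>. \<bar>eta v \<omega> - noise_comb eta W c \<omega>\<bar>) \<and> (\<integral>\<omega>. \<bar>eta v \<omega> - noise_comb eta W c \<omega>\<bar> \<partial>M) < \<epsilon>"
    using assms by (intro exI[of _ "{v}"] exI[of _ "\<lambda>_. 1"]) simp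
qed

lemma noise_limit_char_approx:
  assumes Z: "noise_limit M N eta Z"
  obtains s where "\<And>t. (\<lambda>k. complex_of_real (exp (- (s k * t)\<^sup>2 / 2))) \<longlonglongrightarrow> char (distr M borel Z) t"
proof -
  have "\<forall>k::nat. \<exists>W c. finite W \<and> (\<forall>w\<in>W. fst w < N) \<and>
      integrable M (\<lambda>\<omega>. \<bar>Z \<omega> - noise_comb eta W c \<omega>\<bar>) \<and>
      (\<integral>\<omega>. \<bar>Z \<omega> - noise_comb eta W c \<omega>\<bar> \<partial>M) < inverse (real (Suc k))"
    using Z unfolding noise_limit_def by simp
  then obtain W c where W: "\<And>k. finite (W k)" "\<And>k. \<forall>w\<in>W k. fst w < N"
    and int: "\<And>k. integrable M (\<lambda>\<omega>. \<bar>Z \<omega> - noise_comb eta (W k) (c k) \<omega>\<bar>)"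
    and small: "\<And>k. (\<integral>\<omega>. \<bar>Z \<omega> - noise_comb eta (W k) (c k) \<omega>\<bar> \<partial>M) < inverse (real (Suc k))"
    by metis
  define G where "G k = noise_comb eta (W k) (c k)" for k
  have "\<forall>k. \<exists>s. \<forall>t. char (distr M borel (G k)) t = complex_of_real (exp (- (s * t)\<^sup>2 / 2))"
    using char_noise_comb[OF W] unfolding G_def by metis
  then obtain s where s: "\<And>k t. char (distr M borel (G k)) t = complex_of_real (exp (- (s k * t)\<^sup>2 / 2))"
    by metis
  have "(\<lambda>k. char (distr M borel (G k)) t) \<longlonglongrightarrow> char (distr M borel Z) t" for t
  proof (rule LIM_zero_cancel, rule Lim_null_comparison)
    show "\<forall>\<^sub>F k in sequentially. norm (char (distr M borel (G k)) t - char (distr M borel Z) t)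
        \<le> \<bar>t\<bar> * inverse (real (Suc k))"
    proof (rule always_eventually, rule allI)
      fix k
      have "norm (char (distr M borel Z) t - char (distr M borel (G k)) t)
          \<le> \<bar>t\<bar> * (\<integral>\<omega>. \<bar>Z \<omega> - G k \<omega>\<bar> \<partial>M)"
        using norm_char_diff_le[OF noise_limit_measurable[OF Z] noise_comb_measurable[OF W(2)]] int
        by (simp add: G_def)
      also have "\<dots> \<le> \<bar>t\<bar> * inverse (real (Suc k))"
        using small[of k] by (intro mult_left_mono) (auto simp: G_def)
      finally show "norm (char (distr M borel (G k)) t - char (distr M borel Z) t) \<le> \<bar>t\<bar> * inverse (real (Suc k))"
        by (simp add: norm_minus_commute)
    qed
    show "(\<lambda>k. \<bar>t\<bar> * inverse (real (Suc k))) \<longlonglongrightarrow> 0"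
      by (rule tendsto_mult_right_zero[OF LIMSEQ_inverse_real_of_nat])
  qed
  then show thesis using that[of s] by (simp add: s)
qed

lemma noise_limit_gaussian:
  assumes "noise_limit M N eta Z"
  shows "gaussian_rv M Z"
proof -
  note Z = noise_limit_measurable[OF assms]
  obtain s where "\<And>t. (\<lambda>k. complex_of_real (exp (- (s k * t)\<^sup>2 / 2))) \<longlonglongrightarrow> char (distr M borel Z) t"
    using noise_limit_char_approx[OF assms] by blast
  then obtain \<sigma> where "0 \<le> \<sigma>" "\<And>t. char (distr M borel Z) t = complex_of_real (exp (- (\<sigma> * t)\<^sup>2 / 2))"
    using char_centered_normal_limit[OF real_distribution_distr[OF Z]] by blast
  then show ?thesis by (rule gaussian_rv_char_centered_normal[OF Z])
qed

end

section \<open>Path sums\<close>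

lemma causal_path_not_Nil: "causal_path N p Phi q \<Longrightarrow> q \<noteq> []"
  by (cases q) auto

lemma causal_path_time_bounds:
  "causal_path N p Phi q \<Longrightarrow> (\<forall>v\<in>set q. fst v < N \<and> snd (hd q) \<le> snd v \<and> snd v \<le> snd (last q))
     \<and> int (length q) \<le> snd (last q) - snd (hd q) + 1"
proof (induct N p Phi q rule: causal_path.induct)
  case (3 N p Phi u v rest)
  then have "ts_edge N p Phi u v" "causal_path N p Phi (v # rest)" by simp_all
  with 3 show ?case by (auto simp: ts_edge_def)
qed (simp_all add: node_ok_def)

lemma finite_proper_paths: "finite (proper_paths N p Phi Xs x Y)"
proof (rule finite_subset)
  show "proper_paths N p Phi Xs x Y
      \<subseteq> {q. set q \<subseteq> {..<N} \<times> {snd x..snd Y} \<and> length q \<le> nat (snd Y - snd x + 1)}"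
    using causal_path_time_bounds by (fastforce simp: proper_paths_def mem_Times_iff)
  show "finite {q. set q \<subseteq> {..<N} \<times> {snd x..snd Y} \<and> length q \<le> nat (snd Y - snd x + 1)}"
    by (rule finite_lists_length_le) simp
qed

lemma theta_eq_0_not_later:
  assumes "Y \<noteq> x" "snd Y \<le> snd x"
  shows "theta N p Phi Xs x Y = 0"
proof -
  have "proper_paths N p Phi Xs x Y = {}"
  proof (rule ccontr)
    assume "proper_paths N p Phi Xs x Y \<noteq> {}"
    then obtain q where q: "causal_path N p Phi q" "hd q = x" "last q = Y"
      by (auto simp: proper_paths_def)
    then have "length q \<le> 1" using causal_path_time_bounds[OF q(1)] assms by auto
    then obtain v where "q = [v]" using causal_path_not_Nil[OF q(1)] by (cases q) auto
    then show False using q assms by simp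
  qed
  then show ?thesis by (simp add: theta_def)
qed

lemma theta_eq_0_invalid_target:
  assumes "\<not> fst Y < N"
  shows "theta N p Phi Xs x Y = 0"
proof -
  have "proper_paths N p Phi Xs x Y = {}"
    using causal_path_time_bounds causal_path_not_Nil assms
    by (fastforce simp: proper_paths_def dest: last_in_set)
  then show ?thesis by (simp add: theta_def)
qed

lemma causal_path_snoc:
  "q \<noteq> [] \<Longrightarrow> causal_path N p Phi (q @ [y]) \<longleftrightarrow> causal_path N p Phi q \<and> ts_edge N p Phi (last q) y"
proof (induct q)
  case (Cons a q)
  then show ?case by (cases q) (auto simp: ts_edge_def node_ok_def)
qed simp

lemma path_weight_snoc:
  "q \<noteq> [] \<Longrightarrow> path_weight Phi (q @ [y]) = path_weight Phi q * Phi (nat (snd y - snd (last q))) (fst y) (fst (last q))"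
proof (induct q)
  case (Cons a q)
  then show ?case by (cases q) auto
qed simp

definition avoiding_paths :: "nat \<Rightarrow> nat \<Rightarrow> (nat \<Rightarrow> nat \<Rightarrow> nat \<Rightarrow> real) \<Rightarrow> node set \<Rightarrow> node \<Rightarrow> node list set" where
  "avoiding_paths N p Phi Xs x = {q. causal_path N p Phi q \<and> hd q = x \<and> (\<forall>z\<in>set (tl q). z \<notin> Xs)}"

lemma proper_paths_avoiding: "proper_paths N p Phi Xs x Y = {q \<in> avoiding_paths N p Phi Xs x. last q = Y}"
  by (auto simp: proper_paths_def avoiding_paths_def)

lemma proper_paths_snoc:
  assumes "x \<in> Xs" "Y \<notin> Xs"
  shows "proper_paths N p Phi Xs x Y = (\<lambda>q. q @ [Y]) ` {q \<in> avoiding_paths N p Phi Xs x. ts_edge N p Phi (last q) Y}"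
proof (intro equalityI subsetI)
  fix q assume "q \<in> proper_paths N p Phi Xs x Y"
  then have q: "causal_path N p Phi q" "hd q = x" "last q = Y" "\<forall>z\<in>set (tl q). z \<notin> Xs"
    by (auto simp: proper_paths_def)
  define q' where "q' = butlast q"
  have qq: "q = q' @ [Y]" using append_butlast_last_id[OF causal_path_not_Nil[OF q(1)]] q(3) by (simp add: q'_def)
  have q': "q' \<noteq> []" using qq q(2) assms by (cases q') auto
  have "q' \<in> avoiding_paths N p Phi Xs x \<and> ts_edge N p Phi (last q') Y"
    using q qq q' causal_path_snoc[OF q'] by (cases q') (auto simp: avoiding_paths_def)
  then show "q \<in> (\<lambda>q. q @ [Y]) ` {q \<in> avoiding_paths N p Phi Xs x. ts_edge N p Phi (last q) Y}"
    using qq by blast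
next
  fix q assume "q \<in> (\<lambda>q. q @ [Y]) ` {q \<in> avoiding_paths N p Phi Xs x. ts_edge N p Phi (last q) Y}"
  then obtain q' where q': "q' \<in> avoiding_paths N p Phi Xs x" "ts_edge N p Phi (last q') Y" "q = q' @ [Y]"
    by blast
  then have ne: "q' \<noteq> []" using causal_path_not_Nil by (auto simp: avoiding_paths_def)
  then have "causal_path N p Phi q" using q' causal_path_snoc[OF ne] by (simp add: avoiding_paths_def)
  then show "q \<in> proper_paths N p Phi Xs x Y"
    using q' ne assms by (cases q') (auto simp: avoiding_paths_def proper_paths_def)
qed

text \<open>\<open>path_effect N p Phi Xs x\<close> extends \<open>\<theta>(\<cdot>, x, \<cdot>)\<close> to the intervened nodes by the
  values of a unit intervention at \<open>x\<close> that holds the other nodes of \<open>Xs\<close> at \<open>0\<close>.\<close>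

definition path_effect :: "nat \<Rightarrow> nat \<Rightarrow> (nat \<Rightarrow> nat \<Rightarrow> nat \<Rightarrow> real) \<Rightarrow> node set \<Rightarrow> node \<Rightarrow> node \<Rightarrow> real" where
  "path_effect N p Phi Xs x u = (if u \<in> Xs then (if u = x then 1 else 0) else theta N p Phi Xs x u)"

lemma path_effect_eq_sum:
  assumes "x \<in> Xs" "fst x < N"
  shows "path_effect N p Phi Xs x u = (\<Sum>q\<in>{q \<in> avoiding_paths N p Phi Xs x. last q = u}. path_weight Phi q)"
proof (cases "u \<in> Xs")
  case True
  have "{q \<in> avoiding_paths N p Phi Xs x. last q = u} = (if u = x then {[x]} else {})"
  proof (intro equalityI subsetI)
    fix q assume q: "q \<in> {q \<in> avoiding_paths N p Phi Xs x. last q = u}"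
    then have c: "causal_path N p Phi q" "hd q = x" "last q = u" "\<forall>z\<in>set (tl q). z \<notin> Xs"
      by (auto simp: avoiding_paths_def)
    have "tl q = []"
      using c True causal_path_not_Nil[OF c(1)] by (metis last_in_set last_tl)
    then have "q = [x]" using causal_path_not_Nil[OF c(1)] c(2) by (cases q) auto
    then show "q \<in> (if u = x then {[x]} else {})" using c(3) by auto
  qed (use assms in \<open>auto simp: avoiding_paths_def node_ok_def split: if_splits\<close>)
  then show ?thesis using True by (simp add: path_effect_def)
qed (simp add: path_effect_def theta_def proper_paths_avoiding)

lemma var_rhs_eq_sum_parents:
  assumes "fst Y < N"
  shows "var_rhs N p Phi h Y = (\<Sum>u\<in>{u. ts_edge N p Phi u Y}. Phi (nat (snd Y - snd u)) (fst Y) (fst u) * h u)"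
proof -
  define g where "g = (\<lambda>(k::nat, j::nat). (j, snd Y - int k))"
  define S where "S = {1..p} \<times> {..<N}"
  define F where "F u = Phi (nat (snd Y - snd u)) (fst Y) (fst u) * h u" for u
  have inj: "inj_on g S" by (rule inj_onI) (auto simp: g_def S_def)
  have "var_rhs N p Phi h Y = (\<Sum>kj\<in>S. F (g kj))"
    unfolding var_rhs_def S_def sum.cartesian_product by (intro sum.cong refl) (auto simp: F_def g_def)
  also have "\<dots> = sum F (g ` S)" by (simp add: sum.reindex[OF inj])
  also have "\<dots> = sum F {u. ts_edge N p Phi u Y}"
  proof (rule sum.mono_neutral_right)
    show "finite (g ` S)" by (simp add: S_def)
    show "{u. ts_edge N p Phi u Y} \<subseteq> g ` S"
    proof
      fix u assume "u \<in> {u. ts_edge N p Phi u Y}"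
      then have "(nat (snd Y - snd u), fst u) \<in> S" "u = g (nat (snd Y - snd u), fst u)"
        by (auto simp: ts_edge_def S_def g_def)
      then show "u \<in> g ` S" by blast
    qed
    show "\<forall>u\<in>g ` S - {u. ts_edge N p Phi u Y}. F u = 0"
      using assms by (auto simp: g_def S_def F_def ts_edge_def)
  qed
  finally show ?thesis by (simp add: F_def)
qed

text \<open>Split off the last edge of each proper path.\<close>

lemma theta_var_recursion:
  assumes Y: "fst Y < N" "Y \<notin> Xs" and x: "x \<in> Xs" "fst x < N"
  shows "theta N p Phi Xs x Y = var_rhs N p Phi (path_effect N p Phi Xs x) Y"
proof -
  define A where "A = avoiding_paths N p Phi Xs x"
  define F where "F u = Phi (nat (snd Y - snd u)) (fst Y) (fst u)" for u
  define P where "P = {u. ts_edge N p Phi u Y}"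
  have img: "proper_paths N p Phi Xs x Y = (\<lambda>q. q @ [Y]) ` {q \<in> A. last q \<in> P}"
    unfolding A_def P_def using proper_paths_snoc[OF x(1) Y(2)] by simp
  have inj: "inj_on (\<lambda>q. q @ [Y]) {q \<in> A. last q \<in> P}" by (rule inj_onI) simp
  have finA: "finite {q \<in> A. last q \<in> P}"
    using finite_proper_paths[of N p Phi Xs x Y] finite_imageD[OF _ inj] by (simp add: img)
  have finP: "finite P"
    by (rule finite_subset[of _ "{..<N} \<times> {snd Y - int p..snd Y}"]) (auto simp: P_def ts_edge_def)
  have "theta N p Phi Xs x Y = (\<Sum>q\<in>{q \<in> A. last q \<in> P}. path_weight Phi q * F (last q))"
    unfolding theta_def img sum.reindex[OF inj] using causal_path_not_Nil
    by (intro sum.cong refl) (auto simp: path_weight_snoc F_def A_def avoiding_paths_def)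
  also have "\<dots> = (\<Sum>u\<in>P. \<Sum>q\<in>{q \<in> {q \<in> A. last q \<in> P}. last q = u}. path_weight Phi q * F (last q))"
    by (rule sum.group[symmetric, OF finA finP]) auto
  also have "\<dots> = (\<Sum>u\<in>P. F u * path_effect N p Phi Xs x u)"
  proof (intro sum.cong refl)
    fix u assume "u \<in> P"
    then have "{q \<in> {q \<in> A. last q \<in> P}. last q = u} = {q \<in> A. last q = u}" by auto
    then show "(\<Sum>q\<in>{q \<in> {q \<in> A. last q \<in> P}. last q = u}. path_weight Phi q * F (last q))
        = F u * path_effect N p Phi Xs x u"
      by (simp add: path_effect_eq_sum[OF x] A_def sum_distrib_left mult.commute)
  qed
  also have "\<dots> = var_rhs N p Phi (path_effect N p Phi Xs x) Y"
    by (simp add: var_rhs_eq_sum_parents[OF Y(1)] P_def F_def)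
  finally show ?thesis .
qed

section \<open>Moving-average approximation and homogeneous solutions\<close>

lemma abs_le_1_plus_square: "\<bar>x::real\<bar> \<le> 1 + x\<^sup>2"
proof (cases "\<bar>x\<bar> \<le> 1")
  case False
  then have "\<bar>x\<bar> \<le> \<bar>x\<bar> * \<bar>x\<bar>" by (intro mult_le_cancel_left1[THEN iffD2]) auto
  then show ?thesis by (simp add: power2_eq_square abs_mult_self_eq)
qed (simp add: add_increasing2)

lemma square_diff_le: "(a - b)\<^sup>2 \<le> 2 * (a\<^sup>2 + b\<^sup>2)" for a b :: real
  using zero_le_power2[of "a + b"] by (simp add: power2_eq_square algebra_simps)

context prob_space
begin

lemma integrable_abs_of_square:
  fixes f :: "'a \<Rightarrow> real"
  assumes f: "f \<in> borel_measurable M" and sq: "integrable M (\<lambda>\<omega>. (f \<omega>)\<^sup>2)"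
  shows "integrable M (\<lambda>\<omega>. \<bar>f \<omega>\<bar>)" and "(\<integral>\<omega>. \<bar>f \<omega>\<bar> \<partial>M) \<le> 1 + (\<integral>\<omega>. (f \<omega>)\<^sup>2 \<partial>M)"
proof -
  have bound: "integrable M (\<lambda>\<omega>. 1 + (f \<omega>)\<^sup>2)" using sq by simp
  show int: "integrable M (\<lambda>\<omega>. \<bar>f \<omega>\<bar>)"
    by (rule Bochner_Integration.integrable_bound[OF bound]) (use f abs_le_1_plus_square in \<open>auto intro!: AE_I2\<close>)
  have "(\<integral>\<omega>. \<bar>f \<omega>\<bar> \<partial>M) \<le> (\<integral>\<omega>. 1 + (f \<omega>)\<^sup>2 \<partial>M)"
    by (rule integral_mono[OF int bound abs_le_1_plus_square])
  then show "(\<integral>\<omega>. \<bar>f \<omega>\<bar> \<partial>M) \<le> 1 + (\<integral>\<omega>. (f \<omega>)\<^sup>2 \<partial>M)"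
    using sq by (simp add: prob_space)
qed

lemma integrable_of_square:
  fixes f :: "'a \<Rightarrow> real"
  assumes "f \<in> borel_measurable M" and "integrable M (\<lambda>\<omega>. (f \<omega>)\<^sup>2)"
  shows "integrable M f"
  using integrable_abs_of_square(1)[OF assms] integrable_abs_iff[OF assms(1)] by simp

lemma square_integrable_sum:
  fixes f :: "'i \<Rightarrow> 'a \<Rightarrow> real"
  assumes fin: "finite I" and m: "\<And>i. i \<in> I \<Longrightarrow> f i \<in> borel_measurable M"
    and sq: "\<And>i. i \<in> I \<Longrightarrow> integrable M (\<lambda>\<omega>. (f i \<omega>)\<^sup>2)"
  shows "integrable M (\<lambda>\<omega>. (\<Sum>i\<in>I. f i \<omega>)\<^sup>2)"
    and "(\<integral>\<omega>. (\<Sum>i\<in>I. f i \<omega>)\<^sup>2 \<partial>M) \<le> real (card I) * (\<Sum>i\<in>I. \<integral>\<omega>. (f i \<omega>)\<^sup>2 \<partial>M)"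
proof -
  have bound: "integrable M (\<lambda>\<omega>. real (card I) * (\<Sum>i\<in>I. (f i \<omega>)\<^sup>2))" using sq by simp
  have le: "(\<Sum>i\<in>I. f i \<omega>)\<^sup>2 \<le> real (card I) * (\<Sum>i\<in>I. (f i \<omega>)\<^sup>2)" for \<omega>
    using sum_squared_le_sum_of_squares[of "\<lambda>i. f i \<omega>" I] by (simp add: mult.commute)
  show int: "integrable M (\<lambda>\<omega>. (\<Sum>i\<in>I. f i \<omega>)\<^sup>2)"
    by (rule Bochner_Integration.integrable_bound[OF bound])
      (use m le in \<open>auto intro!: AE_I2 order.trans[OF _ abs_ge_self]\<close>)
  have "(\<integral>\<omega>. (\<Sum>i\<in>I. f i \<omega>)\<^sup>2 \<partial>M) \<le> (\<integral>\<omega>. real (card I) * (\<Sum>i\<in>I. (f i \<omega>)\<^sup>2) \<partial>M)"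
    by (rule integral_mono[OF int bound le])
  then show "(\<integral>\<omega>. (\<Sum>i\<in>I. f i \<omega>)\<^sup>2 \<partial>M) \<le> real (card I) * (\<Sum>i\<in>I. \<integral>\<omega>. (f i \<omega>)\<^sup>2 \<partial>M)"
    using sq by (simp add: Bochner_Integration.integral_sum)
qed

lemma square_integrable_diff:
  fixes a b :: "'a \<Rightarrow> real"
  assumes "a \<in> borel_measurable M" "b \<in> borel_measurable M"
    and sq: "integrable M (\<lambda>\<omega>. (a \<omega>)\<^sup>2)" "integrable M (\<lambda>\<omega>. (b \<omega>)\<^sup>2)"
  shows "integrable M (\<lambda>\<omega>. (a \<omega> - b \<omega>)\<^sup>2)"
    and "(\<integral>\<omega>. (a \<omega> - b \<omega>)\<^sup>2 \<partial>M) \<le> 2 * ((\<integral>\<omega>. (a \<omega>)\<^sup>2 \<partial>M) + (\<integral>\<omega>. (b \<omega>)\<^sup>2 \<partial>M))"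
proof -
  have bound: "integrable M (\<lambda>\<omega>. 2 * ((a \<omega>)\<^sup>2 + (b \<omega>)\<^sup>2))" using sq by simp
  show int: "integrable M (\<lambda>\<omega>. (a \<omega> - b \<omega>)\<^sup>2)"
    by (rule Bochner_Integration.integrable_bound[OF bound])
      (use assms(1,2) square_diff_le in \<open>auto intro!: AE_I2 order.trans[OF _ abs_ge_self]\<close>)
  have "(\<integral>\<omega>. (a \<omega> - b \<omega>)\<^sup>2 \<partial>M) \<le> (\<integral>\<omega>. 2 * ((a \<omega>)\<^sup>2 + (b \<omega>)\<^sup>2) \<partial>M)"
    by (rule integral_mono[OF int bound square_diff_le])
  then show "(\<integral>\<omega>. (a \<omega> - b \<omega>)\<^sup>2 \<partial>M) \<le> 2 * ((\<integral>\<omega>. (a \<omega>)\<^sup>2 \<partial>M) + (\<integral>\<omega>. (b \<omega>)\<^sup>2 \<partial>M))"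
    using sq by simp
qed

lemma square_integrable_affine_comb:
  fixes Y :: "'a \<Rightarrow> real" and d :: "nat \<Rightarrow> 'a \<Rightarrow> real"
  assumes Y: "Y \<in> borel_measurable M" "integrable M (\<lambda>\<omega>. (Y \<omega>)\<^sup>2)"
    and d: "\<And>l. l < m \<Longrightarrow> d l \<in> borel_measurable M" "\<And>l. l < m \<Longrightarrow> integrable M (\<lambda>\<omega>. (d l \<omega>)\<^sup>2)"
  shows "integrable M (\<lambda>\<omega>. (Y \<omega> + (\<Sum>l<m. c l * d l \<omega>))\<^sup>2)"
    and "(\<integral>\<omega>. (Y \<omega> + (\<Sum>l<m. c l * d l \<omega>))\<^sup>2 \<partial>M)
      \<le> real (Suc m) * ((\<integral>\<omega>. (Y \<omega>)\<^sup>2 \<partial>M) + (\<Sum>l<m. (c l)\<^sup>2 * (\<integral>\<omega>. (d l \<omega>)\<^sup>2 \<partial>M)))"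
proof -
  define F where "F i \<omega> = (case i of 0 \<Rightarrow> Y \<omega> | Suc l \<Rightarrow> c l * d l \<omega>)" for i \<omega>
  have eq: "Y \<omega> + (\<Sum>l<m. c l * d l \<omega>) = (\<Sum>i\<in>{..<Suc m}. F i \<omega>)" for \<omega>
    unfolding sum.lessThan_Suc_shift by (simp add: F_def)
  have F: "F i \<in> borel_measurable M" "integrable M (\<lambda>\<omega>. (F i \<omega>)\<^sup>2)" if "i \<in> {..<Suc m}" for i
    using that Y d by (cases i; simp add: F_def[abs_def] power_mult_distrib)+
  have sq: "(\<Sum>i\<in>{..<Suc m}. \<integral>\<omega>. (F i \<omega>)\<^sup>2 \<partial>M)
      = (\<integral>\<omega>. (Y \<omega>)\<^sup>2 \<partial>M) + (\<Sum>l<m. (c l)\<^sup>2 * (\<integral>\<omega>. (d l \<omega>)\<^sup>2 \<partial>M))"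
    unfolding sum.lessThan_Suc_shift by (simp add: F_def power_mult_distrib)
  show "integrable M (\<lambda>\<omega>. (Y \<omega> + (\<Sum>l<m. c l * d l \<omega>))\<^sup>2)"
    unfolding eq by (rule square_integrable_sum(1)) (use F in auto)
  show "(\<integral>\<omega>. (Y \<omega> + (\<Sum>l<m. c l * d l \<omega>))\<^sup>2 \<partial>M)
      \<le> real (Suc m) * ((\<integral>\<omega>. (Y \<omega>)\<^sup>2 \<partial>M) + (\<Sum>l<m. (c l)\<^sup>2 * (\<integral>\<omega>. (d l \<omega>)\<^sup>2 \<partial>M)))"
    unfolding eq sq[symmetric] using square_integrable_sum(2)[of "{..<Suc m}" F] F by simp
qed

lemma integral_abs_sum_le:
  fixes f :: "'i \<Rightarrow> 'a \<Rightarrow> real"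
  assumes "finite I" and m: "\<And>i. i \<in> I \<Longrightarrow> f i \<in> borel_measurable M"
    and int: "\<And>i. i \<in> I \<Longrightarrow> integrable M (\<lambda>\<omega>. \<bar>f i \<omega>\<bar>)"
    and le: "\<And>i. i \<in> I \<Longrightarrow> \<bar>a i\<bar> * (\<integral>\<omega>. \<bar>f i \<omega>\<bar> \<partial>M) \<le> C"
  shows "integrable M (\<lambda>\<omega>. \<bar>\<Sum>i\<in>I. a i * f i \<omega>\<bar>)"
    and "(\<integral>\<omega>. \<bar>\<Sum>i\<in>I. a i * f i \<omega>\<bar> \<partial>M) \<le> real (card I) * C"
proof -
  have fi: "integrable M (f i)" if "i \<in> I" for i
    using int[OF that] integrable_abs_iff[OF m[OF that]] by simp
  show "integrable M (\<lambda>\<omega>. \<bar>\<Sum>i\<in>I. a i * f i \<omega>\<bar>)"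
    using fi by (intro integrable_abs Bochner_Integration.integrable_sum) auto
  have "(\<integral>\<omega>. \<bar>\<Sum>i\<in>I. a i * f i \<omega>\<bar> \<partial>M) \<le> (\<integral>\<omega>. (\<Sum>i\<in>I. \<bar>a i\<bar> * \<bar>f i \<omega>\<bar>) \<partial>M)"
    using fi int
    by (intro integral_mono integrable_abs Bochner_Integration.integrable_sum)
      (auto simp: abs_mult intro: order.trans[OF sum_abs])
  also have "\<dots> = (\<Sum>i\<in>I. \<bar>a i\<bar> * (\<integral>\<omega>. \<bar>f i \<omega>\<bar> \<partial>M))"
    using int by (subst Bochner_Integration.integral_sum) auto
  also have "\<dots> \<le> real (card I) * C"
    using sum_bounded_above[of I "\<lambda>i. \<bar>a i\<bar> * (\<integral>\<omega>. \<bar>f i \<omega>\<bar> \<partial>M)" C] le by simp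
  finally show "(\<integral>\<omega>. \<bar>\<Sum>i\<in>I. a i * f i \<omega>\<bar> \<partial>M) \<le> real (card I) * C" .
qed

text \<open>Unrolling \<open>k\<close> steps leaves a remainder that is a combination of \<open>N p\<close> values of \<open>D\<close>
  with coefficients from \<open>companion_mat N p Phi ^\<^sub>m k\<close>.\<close>

lemma var_L1_remainder_le:
  fixes k :: nat
  assumes decay: "\<And>k a b. a < N*p \<Longrightarrow> b < N*p \<Longrightarrow> \<bar>(companion_mat N p Phi ^\<^sub>m k) $$ (a, b)\<bar> \<le> c * r ^ k"
    and p: "1 \<le> p"
    and Dm: "\<And>v. fst v < N \<Longrightarrow> D v \<in> borel_measurable M"
    and Di: "\<And>v. fst v < N \<Longrightarrow> integrable M (\<lambda>\<omega>. \<bar>D v \<omega>\<bar>)"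
    and DB: "\<And>v. fst v < N \<Longrightarrow> (\<integral>\<omega>. \<bar>D v \<omega>\<bar> \<partial>M) \<le> B"
    and em: "\<And>v. fst v < N \<Longrightarrow> e v \<in> borel_measurable M"
    and ae: "AE \<omega> in M. \<forall>v. fst v < N \<longrightarrow> snd v \<le> T \<longrightarrow> D v \<omega> = var_rhs N p Phi (\<lambda>u. D u \<omega>) v + e v \<omega>"
    and i: "i < N" and t: "t \<le> T"
  defines "MA \<equiv> \<lambda>\<omega>. \<Sum>j<k. \<Sum>b<N. (companion_mat N p Phi ^\<^sub>m j) $$ (i, b) * e (b, t - int j) \<omega>"
  shows "integrable M (\<lambda>\<omega>. \<bar>D (i, t) \<omega> - MA \<omega>\<bar>)"
    and "(\<integral>\<omega>. \<bar>D (i, t) \<omega> - MA \<omega>\<bar> \<partial>M) \<le> real (N*p) * c * r ^ k * B"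
proof -
  define A where "A = companion_mat N p Phi ^\<^sub>m k"
  define R where "R \<omega> = (\<Sum>b<N*p. A $$ (i, b) * D (b mod N, t - int k - int (b div N)) \<omega>)" for \<omega>
  have N: "0 < N" using i by simp
  have iN: "i < N*p" using i p by (metis less_le_trans mult.right_neutral mult_le_mono2)
  have ae_R: "AE \<omega> in M. \<bar>R \<omega>\<bar> = \<bar>D (i, t) \<omega> - MA \<omega>\<bar>"
    using ae
  proof eventually_elim
    case (elim \<omega>)
    have "D (i, t) \<omega> = R \<omega> + MA \<omega>"
      unfolding R_def MA_def A_def
      by (rule var_unroll[where f="\<lambda>u. D u \<omega>" and e="\<lambda>u. e u \<omega>", OF _ i p]) (use elim t in auto)
    then show ?case by simp
  qed
  have coeff: "\<bar>A $$ (i, b)\<bar> * (\<integral>\<omega>. \<bar>D (b mod N, t - int k - int (b div N)) \<omega>\<bar> \<partial>M) \<le> c * r ^ k * B"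
    if "b \<in> {..<N*p}" for b
    using decay[OF iN, of b k] that DB[of "(b mod N, t - int k - int (b div N))"] N unfolding A_def
    by (intro mult_mono) auto
  have R1: "integrable M (\<lambda>\<omega>. \<bar>R \<omega>\<bar>)"
    unfolding R_def by (rule integral_abs_sum_le(1)[where C="c * r ^ k * B"]) (use Dm Di N coeff in simp_all)
  have R2: "(\<integral>\<omega>. \<bar>R \<omega>\<bar> \<partial>M) \<le> real (card {..<N*p}) * (c * r ^ k * B)"
    unfolding R_def by (rule integral_abs_sum_le(2)[where C="c * r ^ k * B"]) (use Dm Di N coeff in simp_all)
  have m: "(\<lambda>\<omega>. \<bar>D (i, t) \<omega> - MA \<omega>\<bar>) \<in> borel_measurable M"
    using Dm[of "(i, t)"] i em N unfolding MA_def by simp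
  show "integrable M (\<lambda>\<omega>. \<bar>D (i, t) \<omega> - MA \<omega>\<bar>)"
    by (rule integrable_cong_AE_imp[OF R1 m ae_R])
  have "(\<integral>\<omega>. \<bar>D (i, t) \<omega> - MA \<omega>\<bar> \<partial>M) = (\<integral>\<omega>. \<bar>R \<omega>\<bar> \<partial>M)"
    by (rule integral_cong_AE) (use m R1 ae_R in auto)
  with R2 show "(\<integral>\<omega>. \<bar>D (i, t) \<omega> - MA \<omega>\<bar> \<partial>M) \<le> real (N*p) * c * r ^ k * B"
    by (simp add: mult.assoc)
qed

lemma var_L1_ma_approx:
  assumes st: "var_stable N p Phi" and p: "1 \<le> p"
    and Dm: "\<And>v. fst v < N \<Longrightarrow> D v \<in> borel_measurable M"
    and Di: "\<And>v. fst v < N \<Longrightarrow> integrable M (\<lambda>\<omega>. \<bar>D v \<omega>\<bar>)"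
    and DB: "\<And>v. fst v < N \<Longrightarrow> (\<integral>\<omega>. \<bar>D v \<omega>\<bar> \<partial>M) \<le> B"
    and em: "\<And>v. fst v < N \<Longrightarrow> e v \<in> borel_measurable M"
    and ae: "AE \<omega> in M. \<forall>v. fst v < N \<longrightarrow> snd v \<le> T \<longrightarrow> D v \<omega> = var_rhs N p Phi (\<lambda>u. D u \<omega>) v + e v \<omega>"
    and i: "i < N" and t: "t \<le> T" and \<epsilon>: "0 < \<epsilon>"
  obtains k where
    "integrable M (\<lambda>\<omega>. \<bar>D (i, t) \<omega> - (\<Sum>j<k. \<Sum>b<N. (companion_mat N p Phi ^\<^sub>m j) $$ (i, b) * e (b, t - int j) \<omega>)\<bar>)"
    "(\<integral>\<omega>. \<bar>D (i, t) \<omega> - (\<Sum>j<k. \<Sum>b<N. (companion_mat N p Phi ^\<^sub>m j) $$ (i, b) * e (b, t - int j) \<omega>)\<bar> \<partial>M) < \<epsilon>"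
proof -
  obtain c r where cr: "0 \<le> c" "0 < r" "r < 1"
    and decay: "\<And>k a b. a < N*p \<Longrightarrow> b < N*p \<Longrightarrow> \<bar>(companion_mat N p Phi ^\<^sub>m k) $$ (a, b)\<bar> \<le> c * r ^ k"
    using companion_pow_decay[OF st] by blast
  have "0 \<le> B" using DB[of "(i, t)"] i by (metis integral_nonneg_AE abs_ge_zero AE_I2 order.trans fst_conv)
  define K where "K = real (N*p) * c * B + 1"
  have K: "0 < K" using cr \<open>0 \<le> B\<close> by (simp add: K_def add_nonneg_pos)
  obtain k where k: "r ^ k < \<epsilon> / K" using real_arch_pow_inv[of "\<epsilon> / K" r] \<epsilon> K cr by auto
  note bound = var_L1_remainder_le[OF decay p Dm Di DB em ae i t, of k]
  have "real (N*p) * c * r ^ k * B \<le> K * r ^ k"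
    using cr \<open>0 \<le> B\<close> by (simp add: K_def algebra_simps)
  also have "\<dots> < \<epsilon>" using k K by (simp add: field_simps)
  finally show thesis using that[of k] bound by simp
qed

text \<open>By stability the remote past, which is bounded in \<open>L\<^sup>1\<close>, is forgotten.\<close>

lemma homogeneous_var_vanishes:
  assumes st: "var_stable N p Phi"
    and Dm: "\<And>v. fst v < N \<Longrightarrow> D v \<in> borel_measurable M"
    and Di: "\<And>v. fst v < N \<Longrightarrow> integrable M (\<lambda>\<omega>. \<bar>D v \<omega>\<bar>)"
    and DB: "\<And>v. fst v < N \<Longrightarrow> (\<integral>\<omega>. \<bar>D v \<omega>\<bar> \<partial>M) \<le> B"
    and ae: "AE \<omega> in M. \<forall>v. fst v < N \<longrightarrow> snd v \<le> T \<longrightarrow> D v \<omega> = var_rhs N p Phi (\<lambda>u. D u \<omega>) v"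
    and i: "i < N" and t: "t \<le> T"
  shows "AE \<omega> in M. D (i, t) \<omega> = 0"
proof (cases "p = 0")
  case True
  show ?thesis using ae by eventually_elim (use i t True in \<open>simp add: var_rhs_def\<close>)
next
  case False
  have ae': "AE \<omega> in M. \<forall>v. fst v < N \<longrightarrow> snd v \<le> T \<longrightarrow> D v \<omega> = var_rhs N p Phi (\<lambda>u. D u \<omega>) v + 0"
    using ae by simp
  have "(\<integral>\<omega>. \<bar>D (i, t) \<omega>\<bar> \<partial>M) < \<epsilon>" if \<epsilon>: "0 < \<epsilon>" for \<epsilon>
  proof -
    obtain k where "(\<integral>\<omega>. \<bar>D (i, t) \<omega> - (\<Sum>j<k. \<Sum>b<N. (companion_mat N p Phi ^\<^sub>m j) $$ (i, b) * 0)\<bar> \<partial>M) < \<epsilon>"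
      using var_L1_ma_approx[OF st _ Dm Di DB _ ae' i t \<epsilon>] False by auto
    then show ?thesis by simp
  qed
  then have "(\<integral>\<omega>. \<bar>D (i, t) \<omega>\<bar> \<partial>M) = 0"
    by (metis integral_nonneg_AE abs_ge_zero AE_I2 less_irrefl order_le_less)
  then have "AE \<omega> in M. \<bar>D (i, t) \<omega>\<bar> = 0"
    using integral_nonneg_eq_0_iff_AE[of M "\<lambda>\<omega>. \<bar>D (i, t) \<omega>\<bar>"] Di[of "(i, t)"] i by simp
  then show ?thesis by simp
qed

end

lemma sum_lag_eq_noise_comb:
  "(\<Sum>j<k. \<Sum>b<N. C j b * e (b, t - int j) \<omega>)
     = noise_comb e ((\<lambda>(j, b). (b, t - int j)) ` ({..<k} \<times> {..<N})) (\<lambda>w. C (nat (t - snd w)) (fst w)) \<omega>"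
proof -
  have "inj_on (\<lambda>(j::nat, b::nat). (b, t - int j)) ({..<k} \<times> {..<N})" by (rule inj_onI) auto
  then show ?thesis
    unfolding noise_comb_def sum.reindex[OF \<open>inj_on _ _\<close>] sum.cartesian_product
    by (intro sum.cong refl) auto
qed

section \<open>The stationary process\<close>

locale stationary_var =
  fixes M :: "'a measure" and N p :: nat and Phi :: "nat \<Rightarrow> nat \<Rightarrow> nat \<Rightarrow> real"
    and X eta :: "node \<Rightarrow> 'a \<Rightarrow> real"
  assumes stationary_VAR: "stationary_VAR M N p Phi X eta"

sublocale stationary_var \<subseteq> gaussian_noise M N eta
  using stationary_VAR unfolding stationary_VAR_def gaussian_noise_def gaussian_noise_axioms_def by blast

context stationary_var
begin

lemma var_stable: "var_stable N p Phi"
  using stationary_VAR by (simp add: stationary_VAR_def)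

lemma X_measurable: "fst v < N \<Longrightarrow> X v \<in> borel_measurable M"
  using stationary_VAR by (cases v) (simp add: stationary_VAR_def weakly_stationary_def)

lemma X_square_integrable: "fst v < N \<Longrightarrow> integrable M (\<lambda>\<omega>. (X v \<omega>)\<^sup>2)"
  using stationary_VAR by (cases v) (simp add: stationary_VAR_def weakly_stationary_def)

lemma X_integrable: "fst v < N \<Longrightarrow> integrable M (X v)"
  using integrable_of_square[OF X_measurable X_square_integrable] .

lemma X_var_equation:
  "AE \<omega> in M. \<forall>v. fst v < N \<longrightarrow> X v \<omega> = var_rhs N p Phi (\<lambda>u. X u \<omega>) v + eta v \<omega>"
proof -
  have "AE \<omega> in M. fst v < N \<longrightarrow> X v \<omega> = var_rhs N p Phi (\<lambda>u. X u \<omega>) v + eta v \<omega>" for v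
  proof (cases "fst v < N")
    case True
    then have "AE \<omega> in M. X v \<omega> = var_rhs N p Phi (\<lambda>u. X u \<omega>) v + eta v \<omega>"
      using stationary_VAR by (cases v) (simp add: stationary_VAR_def)
    then show ?thesis by (rule eventually_mono) simp
  qed simp
  then show ?thesis by (simp add: AE_all_countable)
qed

lemma X_second_moment_le:
  assumes "fst v < N"
  shows "(\<integral>\<omega>. (X v \<omega>)\<^sup>2 \<partial>M) \<le> (\<Sum>i<N. \<integral>\<omega>. (X (i, 0) \<omega>)\<^sup>2 \<partial>M)"
proof -
  obtain i t where v: "v = (i, t)" by (cases v)
  then have i: "i < N" using assms by simp
  have "(\<integral>\<omega>. X (i, t + 0) \<omega> * X (i, t) \<omega> \<partial>M) = (\<integral>\<omega>. X (i, 0) \<omega> * X (i, 0) \<omega> \<partial>M)"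
    using stationary_VAR i unfolding stationary_VAR_def weakly_stationary_def by blast
  then have "(\<integral>\<omega>. (X v \<omega>)\<^sup>2 \<partial>M) = (\<integral>\<omega>. (X (i, 0) \<omega>)\<^sup>2 \<partial>M)" by (simp add: v power2_eq_square)
  also have "\<dots> \<le> (\<Sum>i<N. \<integral>\<omega>. (X (i, 0) \<omega>)\<^sup>2 \<partial>M)"
    by (rule member_le_sum) (use i in auto)
  finally show ?thesis .
qed

lemma noise_limit_X:
  assumes v: "fst v < N"
  shows "noise_limit M N eta (X v)"
proof (cases "p = 0")
  case True
  have "AE \<omega> in M. eta v \<omega> = X v \<omega>"
    using X_var_equation by eventually_elim (use v True in \<open>cases v; simp add: var_rhs_def\<close>)
  then show ?thesis by (rule noise_limit_cong_AE[OF noise_limit_noise[OF v] X_measurable[OF v]])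
next
  case False
  obtain i t where it: "v = (i, t)" by (cases v)
  define B where "B = 1 + (\<Sum>i<N. \<integral>\<omega>. (X (i, 0) \<omega>)\<^sup>2 \<partial>M)"
  have XB: "(\<integral>\<omega>. \<bar>X u \<omega>\<bar> \<partial>M) \<le> B" if "fst u < N" for u
    using integrable_abs_of_square(2)[OF X_measurable[OF that] X_square_integrable[OF that]]
      X_second_moment_le[OF that] by (simp add: B_def)
  show ?thesis unfolding noise_limit_def
  proof (intro conjI allI impI)
    fix \<epsilon> :: real assume "0 < \<epsilon>"
    have ae: "AE \<omega> in M. \<forall>u. fst u < N \<longrightarrow> snd u \<le> t \<longrightarrow> X u \<omega> = var_rhs N p Phi (\<lambda>u. X u \<omega>) u + eta u \<omega>"
      using X_var_equation by auto
    have "1 \<le> p" "i < N" using False v it by auto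
    from var_L1_ma_approx[OF var_stable this(1) X_measurable
        integrable_abs_of_square(1)[OF X_measurable X_square_integrable] XB noise_measurable ae this(2)
        order.refl \<open>0 < \<epsilon>\<close>]
    obtain k where k:
      "integrable M (\<lambda>\<omega>. \<bar>X v \<omega> - (\<Sum>j<k. \<Sum>b<N. (companion_mat N p Phi ^\<^sub>m j) $$ (i, b) * eta (b, t - int j) \<omega>)\<bar>)"
      "(\<integral>\<omega>. \<bar>X v \<omega> - (\<Sum>j<k. \<Sum>b<N. (companion_mat N p Phi ^\<^sub>m j) $$ (i, b) * eta (b, t - int j) \<omega>)\<bar> \<partial>M) < \<epsilon>"
      unfolding it by blast
    define W where "W = (\<lambda>(j, b). (b, t - int j)) ` ({..<k} \<times> {..<N})"
    define c where "c w = (companion_mat N p Phi ^\<^sub>m nat (t - snd w)) $$ (i, fst w)" for w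
    have "finite W" "\<forall>w\<in>W. fst w < N" by (auto simp: W_def)
    moreover have "integrable M (\<lambda>\<omega>. \<bar>X v \<omega> - noise_comb eta W c \<omega>\<bar>)"
      "(\<integral>\<omega>. \<bar>X v \<omega> - noise_comb eta W c \<omega>\<bar> \<partial>M) < \<epsilon>"
      using k[unfolded sum_lag_eq_noise_comb[where C="\<lambda>j b. (companion_mat N p Phi ^\<^sub>m j) $$ (i, b)" and e=eta]]
      unfolding W_def c_def .
    ultimately show "\<exists>W c. finite W \<and> (\<forall>w\<in>W. fst w < N) \<and>
        integrable M (\<lambda>\<omega>. \<bar>X v \<omega> - noise_comb eta W c \<omega>\<bar>) \<and> (\<integral>\<omega>. \<bar>X v \<omega> - noise_comb eta W c \<omega>\<bar> \<partial>M) < \<epsilon>"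
      by (intro exI[of _ W] exI[of _ c] conjI)
  qed (rule X_measurable[OF v])
qed

lemma X_mean_shift: "i < N \<Longrightarrow> (\<integral>\<omega>. X (i, t) \<omega> \<partial>M) = (\<integral>\<omega>. X (i, 0) \<omega> \<partial>M)"
  using stationary_VAR unfolding stationary_VAR_def weakly_stationary_def by blast

lemma X_mean_var_recursion:
  assumes i: "i < N"
  shows "(\<integral>\<omega>. X (i, 0) \<omega> \<partial>M) = var_rhs N p Phi (\<lambda>u. \<integral>\<omega>. X (fst u, 0) \<omega> \<partial>M) (i, t)"
proof -
  define \<mu> where "\<mu> j = (\<integral>\<omega>. X (j, 0) \<omega> \<partial>M)" for j
  have mean_shift: "(\<integral>\<omega>. X (j, s) \<omega> \<partial>M) = \<mu> j" if "j < N" for j s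
    using X_mean_shift[OF that] by (simp add: \<mu>_def)
  have rhs: "integrable M (\<lambda>\<omega>. var_rhs N p Phi (\<lambda>u. X u \<omega>) (i, t))"
    unfolding var_rhs_def by (intro Bochner_Integration.integrable_sum) (simp add: X_integrable)
  have eq: "AE \<omega> in M. X (i, t) \<omega> = var_rhs N p Phi (\<lambda>u. X u \<omega>) (i, t) + eta (i, t) \<omega>"
    using X_var_equation i by auto
  have eta: "integrable M (eta (i, t))" "(\<integral>\<omega>. eta (i, t) \<omega> \<partial>M) = 0"
  proof -
    show "integrable M (eta (i, t))"
      by (rule integrable_cong_AE_imp[of _ "\<lambda>\<omega>. X (i, t) \<omega> - var_rhs N p Phi (\<lambda>u. X u \<omega>) (i, t)"])
        (use X_integrable[of "(i, t)"] rhs i eq noise_measurable[of "(i, t)"] in auto)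
    obtain \<sigma> where "\<forall>v. fst v < N \<longrightarrow> distributed M lborel (eta v) (normal_density 0 (\<sigma> (fst v)))"
      "\<forall>i<N. 0 < \<sigma> i"
      using white_noise unfolding gaussian_white_noise_def by blast
    then show "(\<integral>\<omega>. eta (i, t) \<omega> \<partial>M) = 0"
      using normal_distributed_expectation[of "\<sigma> i" "eta (i, t)" 0] i by auto
  qed
  from eq have "(\<integral>\<omega>. X (i, t) \<omega> \<partial>M) = (\<integral>\<omega>. var_rhs N p Phi (\<lambda>u. X u \<omega>) (i, t) + eta (i, t) \<omega> \<partial>M)"
    by (rule integral_cong_AE[rotated 2])
      (use X_measurable[of "(i, t)"] i rhs eta(1) in \<open>auto intro: borel_measurable_integrable\<close>)
  also have "\<dots> = (\<integral>\<omega>. var_rhs N p Phi (\<lambda>u. X u \<omega>) (i, t) \<partial>M)"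
    using rhs eta by simp
  also have "\<dots> = var_rhs N p Phi (\<lambda>u. \<mu> (fst u)) (i, t)"
  proof -
    have "(\<integral>\<omega>. (\<Sum>j<N. Phi k i j * X (j, t - int k) \<omega>) \<partial>M) = (\<Sum>j<N. Phi k i j * \<mu> j)" for k
      by (subst Bochner_Integration.integral_sum) (simp_all add: X_integrable mean_shift)
    then show ?thesis
      unfolding var_rhs_def fst_conv snd_conv
      by (subst Bochner_Integration.integral_sum) (auto simp: X_integrable)
  qed
  finally have "\<mu> i = var_rhs N p Phi (\<lambda>u. \<mu> (fst u)) (i, t)" using mean_shift[OF i] by simp
  then show ?thesis by (simp add: \<mu>_def)
qed

lemma X_mean_zero:
  assumes v: "fst v < N"
  shows "(\<integral>\<omega>. X v \<omega> \<partial>M) = 0"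
proof -
  define \<mu> :: "node \<Rightarrow> 'a \<Rightarrow> real" where "\<mu> u \<omega> = (\<integral>\<omega>. X (fst u, 0) \<omega> \<partial>M)" for u \<omega>
  define B where "B = (\<Sum>i<N. \<bar>\<integral>\<omega>. X (i, 0) \<omega> \<partial>M\<bar>)"
  have "AE \<omega> in M. \<mu> (fst v, 0) \<omega> = 0"
  proof (rule homogeneous_var_vanishes[OF var_stable, where T=0])
    show "\<mu> u \<in> borel_measurable M" "integrable M (\<lambda>\<omega>. \<bar>\<mu> u \<omega>\<bar>)" for u
      by (simp_all add: \<mu>_def[abs_def])
    show "(\<integral>\<omega>. \<bar>\<mu> u \<omega>\<bar> \<partial>M) \<le> B" if "fst u < N" for u
      using member_le_sum[of "fst u" "{..<N}" "\<lambda>i. \<bar>\<integral>\<omega>. X (i, 0) \<omega> \<partial>M\<bar>"] that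
      by (simp add: \<mu>_def B_def prob_space)
    show "AE \<omega> in M. \<forall>u. fst u < N \<longrightarrow> snd u \<le> 0 \<longrightarrow> \<mu> u \<omega> = var_rhs N p Phi (\<lambda>u. \<mu> u \<omega>) u"
    proof (rule AE_I2, intro allI impI)
      fix \<omega> and u :: node assume "fst u < N"
      then show "\<mu> u \<omega> = var_rhs N p Phi (\<lambda>u. \<mu> u \<omega>) u"
        using X_mean_var_recursion[of "fst u" "snd u"] by (simp add: \<mu>_def)
    qed
  qed (use v in simp_all)
  then have "(\<integral>\<omega>. X (fst v, 0) \<omega> \<partial>M) = 0" by (simp add: \<mu>_def)
  then show ?thesis using X_mean_shift[OF v, of "snd v"] by simp
qed

end

section \<open>Interventions\<close>

lemma var_homogeneous_bounded_after:
  assumes st: "var_stable N p Phi"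
    and hom: "\<And>i t. i < N \<Longrightarrow> T < t \<Longrightarrow> h (i, t) = var_rhs N p Phi h (i, t)"
  obtains G where "\<And>i t. i < N \<Longrightarrow> T < t \<Longrightarrow> \<bar>h (i, t)\<bar> \<le> G"
proof (cases "p = 0")
  case True
  then show thesis using that[of 0] hom by (simp add: var_rhs_def)
next
  case False
  obtain c r where cr: "0 \<le> c" "0 < r" "r < 1"
    and decay: "\<And>k a b. a < N*p \<Longrightarrow> b < N*p \<Longrightarrow> \<bar>(companion_mat N p Phi ^\<^sub>m k) $$ (a, b)\<bar> \<le> c * r ^ k"
    using companion_pow_decay[OF st] by blast
  define S where "S = (\<Sum>b<N*p. \<bar>h (b mod N, T - int (b div N))\<bar>)"
  have "\<bar>h (i, t)\<bar> \<le> c * S" if i: "i < N" and t: "T < t" for i t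
  proof -
    define k where "k = nat (t - T)"
    have tk: "t - int k = T" using t by (simp add: k_def)
    have "N \<le> N*p" using False by (cases p) auto
    then have iN: "i < N*p" using i by linarith
    have "h (i, t) = (\<Sum>b<N*p. (companion_mat N p Phi ^\<^sub>m k) $$ (i, b) * h (b mod N, t - int k - int (b div N)))
        + (\<Sum>j<k. \<Sum>b<N. (companion_mat N p Phi ^\<^sub>m j) $$ (i, b) * 0)"
      by (rule var_unroll[OF _ i]) (use hom tk False in auto)
    then have "\<bar>h (i, t)\<bar> \<le> (\<Sum>b<N*p. \<bar>(companion_mat N p Phi ^\<^sub>m k) $$ (i, b)\<bar> * \<bar>h (b mod N, T - int (b div N))\<bar>)"
      using tk by (simp add: order.trans[OF sum_abs] abs_mult)
    also have "\<dots> \<le> (\<Sum>b<N*p. c * \<bar>h (b mod N, T - int (b div N))\<bar>)"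
    proof (rule sum_mono)
      fix b assume "b \<in> {..<N*p}"
      then have "\<bar>(companion_mat N p Phi ^\<^sub>m k) $$ (i, b)\<bar> \<le> c"
        using decay[OF iN, of b k] cr mult_left_le[of "r ^ k" c] by (simp add: power_le_one)
      then show "\<bar>(companion_mat N p Phi ^\<^sub>m k) $$ (i, b)\<bar> * \<bar>h (b mod N, T - int (b div N))\<bar>
          \<le> c * \<bar>h (b mod N, T - int (b div N))\<bar>"
        by (intro mult_right_mono) auto
    qed
    finally show ?thesis by (simp add: S_def sum_distrib_left)
  qed
  then show thesis by (rule that)
qed

lemma path_effect_bounded:
  assumes st: "var_stable N p Phi" and x: "x \<in> Xs" and fin: "finite Xs" and Xs: "\<forall>u\<in>Xs. fst u < N"
  obtains H where "\<And>v. \<bar>path_effect N p Phi Xs x v\<bar> \<le> H"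
proof -
  define h where "h = path_effect N p Phi Xs x"
  define T where "T = Max (snd ` Xs)"
  have T: "snd u \<le> T" if "u \<in> Xs" for u unfolding T_def using fin that by (intro Max_ge) auto
  have "h (i, t) = var_rhs N p Phi h (i, t)" if "i < N" "T < t" for i t
  proof -
    have "(i, t) \<notin> Xs" using T[of "(i, t)"] that by auto
    then show ?thesis
      using theta_var_recursion[of "(i, t)" N Xs x p Phi] that x Xs by (simp add: h_def path_effect_def)
  qed
  then obtain G where G: "\<And>i t. i < N \<Longrightarrow> T < t \<Longrightarrow> \<bar>h (i, t)\<bar> \<le> G"
    using var_homogeneous_bounded_after[OF st] by blast
  text \<open>Between \<open>x\<close> and the last intervention only finitely many nodes are reachable.\<close>
  define F where "F = {..<N} \<times> {snd x<..T}"
  have "\<bar>h v\<bar> \<le> 1 + \<bar>G\<bar> + (\<Sum>u\<in>F. \<bar>h u\<bar>)" for v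
  proof -
    have nonneg: "0 \<le> (\<Sum>u\<in>F. \<bar>h u\<bar>)" by (simp add: sum_nonneg)
    consider "v \<in> Xs" | "fst v < N" "T < snd v" | "v \<in> F" | "h v = 0"
      using theta_eq_0_invalid_target[of v N p Phi Xs x] theta_eq_0_not_later[of v x N p Phi Xs] x
      by (cases v) (fastforce simp: h_def path_effect_def F_def)
    then show ?thesis
    proof cases
      case 1 then show ?thesis using nonneg by (simp add: h_def path_effect_def)
    next
      case 2
      then have "\<bar>h v\<bar> \<le> G" using G[of "fst v" "snd v"] by simp
      with nonneg show ?thesis by linarith
    next
      case 3 then show ?thesis using member_le_sum[of v F "\<lambda>u. \<bar>h u\<bar>"] by (simp add: F_def)
    next
      case 4 then show ?thesis using nonneg by simp
    qed
  qed
  then show thesis unfolding h_def by (rule that)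
qed

context prob_space
begin

text \<open>Before the earliest node of \<open>Xs\<close> this is \<open>homogeneous_var_vanishes\<close>;
  afterwards every node outside \<open>Xs\<close> is a combination of earlier, already vanishing, nodes.\<close>

lemma homogeneous_var_vanishes_outside:
  assumes st: "var_stable N p Phi" and fin: "finite Xs"
    and Dm: "\<And>v. fst v < N \<Longrightarrow> D v \<in> borel_measurable M"
    and Di: "\<And>v. fst v < N \<Longrightarrow> integrable M (\<lambda>\<omega>. \<bar>D v \<omega>\<bar>)"
    and DB: "\<And>v. fst v < N \<Longrightarrow> (\<integral>\<omega>. \<bar>D v \<omega>\<bar> \<partial>M) \<le> B"
    and hom: "AE \<omega> in M. \<forall>v. fst v < N \<longrightarrow> v \<notin> Xs \<longrightarrow> D v \<omega> = var_rhs N p Phi (\<lambda>u. D u \<omega>) v"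
    and zero: "\<And>v. v \<in> Xs \<Longrightarrow> AE \<omega> in M. D v \<omega> = 0"
    and Y: "fst Y < N"
  shows "AE \<omega> in M. D Y \<omega> = 0"
proof -
  define T where "T = (if Xs = {} then snd Y else Min (snd ` Xs) - 1)"
  have before: "v \<notin> Xs" if "snd v \<le> T" for v
    using that fin Min_le[of "snd ` Xs" "snd v"] by (auto simp: T_def split: if_splits)
  have step: "\<forall>i<N. \<forall>s. s \<le> T + int n \<longrightarrow> (AE \<omega> in M. D (i, s) \<omega> = 0)" for n
  proof (induct n)
    case 0
    have "AE \<omega> in M. \<forall>v. fst v < N \<longrightarrow> snd v \<le> T \<longrightarrow> D v \<omega> = var_rhs N p Phi (\<lambda>u. D u \<omega>) v"
      using hom by eventually_elim (use before in blast)
    from homogeneous_var_vanishes[OF st Dm Di DB this] show ?case by simp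
  next
    case (Suc n)
    show ?case
    proof (intro allI impI)
      fix i s assume i: "i < N" and s: "s \<le> T + int (Suc n)"
      consider "s \<le> T + int n" | "(i, s) \<in> Xs" | "s = T + int (Suc n)" "(i, s) \<notin> Xs" using s by linarith
      then show "AE \<omega> in M. D (i, s) \<omega> = 0"
      proof cases
        case 3
        have "AE \<omega> in M. \<forall>k\<in>{1..p}. \<forall>j\<in>{..<N}. D (j, s - int k) \<omega> = 0"
          using Suc 3(1) by (intro AE_finite_allI) auto
        then show ?thesis using hom by eventually_elim (use i 3(2) in \<open>simp add: var_rhs_def\<close>)
      qed (use Suc i zero in auto)
    qed
  qed
  obtain i s where Y': "Y = (i, s)" by (cases Y)
  have "s \<le> T + int (nat (s - T))" by simp
  then show ?thesis using step[of "nat (s - T)"] Y Y' by simp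
qed

lemma intervened_process_unique:
  assumes st: "var_stable N p Phi"
    and I1: "intervened_process M N p Phi eta Xs x Xi1" and I2: "intervened_process M N p Phi eta Xs x Xi2"
    and Y: "fst Y < N"
  shows "AE \<omega> in M. Xi1 Y \<omega> = Xi2 Y \<omega>"
proof -
  obtain B1 where B1: "\<And>v. fst v < N \<Longrightarrow> (\<integral>\<omega>. (Xi1 v \<omega>)\<^sup>2 \<partial>M) \<le> B1"
    using I1 unfolding intervened_process_def by blast
  obtain B2 where B2: "\<And>v. fst v < N \<Longrightarrow> (\<integral>\<omega>. (Xi2 v \<omega>)\<^sup>2 \<partial>M) \<le> B2"
    using I2 unfolding intervened_process_def by blast
  have m: "Xi1 v \<in> borel_measurable M" "Xi2 v \<in> borel_measurable M"
    and sq: "integrable M (\<lambda>\<omega>. (Xi1 v \<omega>)\<^sup>2)" "integrable M (\<lambda>\<omega>. (Xi2 v \<omega>)\<^sup>2)" if "fst v < N" for v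
    using I1 I2 that unfolding intervened_process_def by blast+
  define D where "D v \<omega> = Xi1 v \<omega> - Xi2 v \<omega>" for v \<omega>
  have D_sq: "integrable M (\<lambda>\<omega>. (D v \<omega>)\<^sup>2)" "(\<integral>\<omega>. (D v \<omega>)\<^sup>2 \<partial>M) \<le> 2 * (B1 + B2)"
    if "fst v < N" for v
    using square_integrable_diff[OF m(1,2)[OF that] sq(1,2)[OF that]] B1[OF that] B2[OF that]
    by (simp_all add: D_def)
  have "AE \<omega> in M. D Y \<omega> = 0"
  proof (rule homogeneous_var_vanishes_outside[OF st finite_set, where B="1 + 2 * (B1 + B2)"])
    show "D v \<in> borel_measurable M" if "fst v < N" for v
      using m[OF that] by (simp add: D_def[abs_def])
    show "integrable M (\<lambda>\<omega>. \<bar>D v \<omega>\<bar>)" if "fst v < N" for v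
      using integrable_abs_of_square(1)[OF _ D_sq(1)[OF that]] m[OF that] by (simp add: D_def[abs_def])
    show "(\<integral>\<omega>. \<bar>D v \<omega>\<bar> \<partial>M) \<le> 1 + 2 * (B1 + B2)" if "fst v < N" for v
      using integrable_abs_of_square(2)[OF _ D_sq(1)[OF that]] D_sq(2)[OF that] m[OF that]
      by (simp add: D_def[abs_def])
    have "AE \<omega> in M. fst v < N \<longrightarrow> v \<notin> set Xs \<longrightarrow> D v \<omega> = var_rhs N p Phi (\<lambda>u. D u \<omega>) v" for v
    proof (cases "fst v < N \<and> v \<notin> set Xs")
      case True
      then have "AE \<omega> in M. Xi1 v \<omega> = var_rhs N p Phi (\<lambda>u. Xi1 u \<omega>) v + eta v \<omega>"
          "AE \<omega> in M. Xi2 v \<omega> = var_rhs N p Phi (\<lambda>u. Xi2 u \<omega>) v + eta v \<omega>"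
        using I1 I2 unfolding intervened_process_def by blast+
      then show ?thesis
        by eventually_elim (simp add: D_def var_rhs_def right_diff_distrib sum_subtractf)
    qed simp
    then show "AE \<omega> in M. \<forall>v. fst v < N \<longrightarrow> v \<notin> set Xs \<longrightarrow> D v \<omega> = var_rhs N p Phi (\<lambda>u. D u \<omega>) v"
      by (simp add: AE_all_countable)
    show "AE \<omega> in M. D v \<omega> = 0" if "v \<in> set Xs" for v
      using I1 I2 that unfolding intervened_process_def D_def in_set_conv_nth by (auto intro!: AE_I2)
  qed (rule Y)
  then show ?thesis by (simp add: D_def)
qed

end

text \<open>The intervened process is \<open>X\<close> plus the response of the system to the forced changes
  \<open>x l - X(Xs ! l)\<close> at the intervened nodes.\<close>

definition intervened_solution :: "nat \<Rightarrow> nat \<Rightarrow> (nat \<Rightarrow> nat \<Rightarrow> nat \<Rightarrow> real) \<Rightarrow> (node \<Rightarrow> 'a \<Rightarrow> real)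
    \<Rightarrow> node list \<Rightarrow> (nat \<Rightarrow> real) \<Rightarrow> node \<Rightarrow> 'a \<Rightarrow> real" where
  "intervened_solution N p Phi X Xs x v \<omega> =
     X v \<omega> + (\<Sum>l<length Xs. path_effect N p Phi (set Xs) (Xs ! l) v * (x l - X (Xs ! l) \<omega>))"

context stationary_var
begin

lemma path_effects_bounded:
  assumes Xs: "\<forall>v\<in>set Xs. fst v < N"
  obtains H where "\<And>l v. l < length Xs \<Longrightarrow> \<bar>path_effect N p Phi (set Xs) (Xs ! l) v\<bar> \<le> H"
proof -
  have "\<forall>l. \<exists>H. l < length Xs \<longrightarrow> (\<forall>v. \<bar>path_effect N p Phi (set Xs) (Xs ! l) v\<bar> \<le> H)"
    using path_effect_bounded[OF var_stable _ finite_set Xs] nth_mem by metis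
  then obtain H where H: "\<And>l v. l < length Xs \<Longrightarrow> \<bar>path_effect N p Phi (set Xs) (Xs ! l) v\<bar> \<le> H l"
    by metis
  have "H l \<le> (\<Sum>l<length Xs. \<bar>H l\<bar>)" if "l < length Xs" for l
    using member_le_sum[of l "{..<length Xs}" "\<lambda>l. \<bar>H l\<bar>"] that by simp
  then show thesis using that H by (meson order.trans)
qed

lemma intervened_solution_square_integrable:
  assumes Xs: "\<forall>v\<in>set Xs. fst v < N"
  obtains C where "\<And>v. fst v < N \<Longrightarrow> intervened_solution N p Phi X Xs x v \<in> borel_measurable M"
    "\<And>v. fst v < N \<Longrightarrow> integrable M (\<lambda>\<omega>. (intervened_solution N p Phi X Xs x v \<omega>)\<^sup>2)"
    "\<And>v. fst v < N \<Longrightarrow> (\<integral>\<omega>. (intervened_solution N p Phi X Xs x v \<omega>)\<^sup>2 \<partial>M) \<le> C"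
proof -
  define m where "m = length Xs"
  define h where "h l = path_effect N p Phi (set Xs) (Xs ! l)" for l
  define d where "d l \<omega> = x l - X (Xs ! l) \<omega>" for l \<omega>
  obtain H where H: "\<And>l v. l < m \<Longrightarrow> \<bar>h l v\<bar> \<le> H"
    using path_effects_bounded[OF Xs] unfolding h_def m_def by blast
  have XsN: "fst (Xs ! l) < N" if "l < m" for l using Xs that by (simp add: m_def)
  have d: "d l \<in> borel_measurable M" "integrable M (\<lambda>\<omega>. (d l \<omega>)\<^sup>2)" if "l < m" for l
    using square_integrable_diff(1)[of "\<lambda>_. x l" "X (Xs ! l)"] X_measurable[OF XsN[OF that]]
      X_square_integrable[OF XsN[OF that]] by (simp_all add: d_def[abs_def])
  have sol: "intervened_solution N p Phi X Xs x v = (\<lambda>\<omega>. X v \<omega> + (\<Sum>l<m. h l v * d l \<omega>))" for v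
    by (simp add: fun_eq_iff intervened_solution_def h_def d_def m_def)
  have comb: "integrable M (\<lambda>\<omega>. (X v \<omega> + (\<Sum>l<m. h l v * d l \<omega>))\<^sup>2)"
    "(\<integral>\<omega>. (X v \<omega> + (\<Sum>l<m. h l v * d l \<omega>))\<^sup>2 \<partial>M)
      \<le> real (Suc m) * ((\<integral>\<omega>. (X v \<omega>)\<^sup>2 \<partial>M) + (\<Sum>l<m. (h l v)\<^sup>2 * (\<integral>\<omega>. (d l \<omega>)\<^sup>2 \<partial>M)))"
    if "fst v < N" for v
    using square_integrable_affine_comb[of "X v" m d "\<lambda>l. h l v"] X_measurable[OF that]
      X_square_integrable[OF that] d by auto
  define C where "C = real (Suc m) * ((\<Sum>i<N. \<integral>\<omega>. (X (i, 0) \<omega>)\<^sup>2 \<partial>M) + (\<Sum>l<m. H\<^sup>2 * (\<integral>\<omega>. (d l \<omega>)\<^sup>2 \<partial>M)))"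
  have "(\<integral>\<omega>. (intervened_solution N p Phi X Xs x v \<omega>)\<^sup>2 \<partial>M) \<le> C" if v: "fst v < N" for v
  proof -
    have "(h l v)\<^sup>2 * (\<integral>\<omega>. (d l \<omega>)\<^sup>2 \<partial>M) \<le> H\<^sup>2 * (\<integral>\<omega>. (d l \<omega>)\<^sup>2 \<partial>M)" if "l < m" for l
      using H[OF that, of v] by (intro mult_right_mono) (simp_all add: abs_le_square_iff[symmetric])
    then have "(\<integral>\<omega>. (X v \<omega>)\<^sup>2 \<partial>M) + (\<Sum>l<m. (h l v)\<^sup>2 * (\<integral>\<omega>. (d l \<omega>)\<^sup>2 \<partial>M))
        \<le> (\<Sum>i<N. \<integral>\<omega>. (X (i, 0) \<omega>)\<^sup>2 \<partial>M) + (\<Sum>l<m. H\<^sup>2 * (\<integral>\<omega>. (d l \<omega>)\<^sup>2 \<partial>M))"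
      by (intro add_mono X_second_moment_le[OF v] sum_mono) auto
    then show ?thesis
      unfolding sol C_def using comb(2)[OF v] by (meson mult_left_mono of_nat_0_le_iff order.trans)
  qed
  moreover have "intervened_solution N p Phi X Xs x v \<in> borel_measurable M" if "fst v < N" for v
    unfolding sol using X_measurable[OF that] d by (auto intro!: borel_measurable_sum)
  ultimately show thesis using that comb(1) unfolding sol by blast
qed

lemma intervened_solution_at_intervention:
  assumes "distinct Xs" "l < length Xs"
  shows "intervened_solution N p Phi X Xs x (Xs ! l) \<omega> = x l"
proof -
  have "path_effect N p Phi (set Xs) (Xs ! l') (Xs ! l) = (if l' = l then 1 else 0)" if "l' < length Xs" for l'
    using assms that by (simp add: path_effect_def nth_eq_iff_index_eq)
  then have "(\<Sum>l'<length Xs. path_effect N p Phi (set Xs) (Xs ! l') (Xs ! l) * (x l' - X (Xs ! l') \<omega>))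
      = (\<Sum>l'<length Xs. if l' = l then x l' - X (Xs ! l') \<omega> else 0)"
    by (intro sum.cong refl) simp
  also have "\<dots> = x l - X (Xs ! l) \<omega>" using assms(2) by simp
  finally have "(\<Sum>l'<length Xs. path_effect N p Phi (set Xs) (Xs ! l') (Xs ! l) * (x l' - X (Xs ! l') \<omega>))
      = x l - X (Xs ! l) \<omega>" .
  then show ?thesis by (simp add: intervened_solution_def)
qed

lemma intervened_solution_var_equation:
  assumes Xs: "\<forall>v\<in>set Xs. fst v < N" and v: "fst v < N" "v \<notin> set Xs"
  shows "AE \<omega> in M. intervened_solution N p Phi X Xs x v \<omega>
      = var_rhs N p Phi (\<lambda>u. intervened_solution N p Phi X Xs x u \<omega>) v + eta v \<omega>"
  using X_var_equation
proof eventually_elim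
  case (elim \<omega>)
  define h where "h l = path_effect N p Phi (set Xs) (Xs ! l)" for l
  have "h l v = var_rhs N p Phi (h l) v" if "l < length Xs" for l
    using theta_var_recursion[of v N "set Xs" "Xs ! l" p Phi] v Xs that by (simp add: h_def path_effect_def)
  then have "var_rhs N p Phi (\<lambda>u. intervened_solution N p Phi X Xs x u \<omega>) v
      = var_rhs N p Phi (\<lambda>u. X u \<omega>) v + (\<Sum>l<length Xs. h l v * (x l - X (Xs ! l) \<omega>))"
    unfolding intervened_solution_def h_def[symmetric] var_rhs_def
    by (simp add: distrib_left sum.distrib sum_distrib_left sum_distrib_right mult.assoc sum.swap[of _ "{..<length Xs}"])
  moreover have "X v \<omega> = var_rhs N p Phi (\<lambda>u. X u \<omega>) v + eta v \<omega>" using elim v by (cases v) simp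
  ultimately show ?case by (simp add: intervened_solution_def h_def)
qed

lemma intervened_process_intervened_solution:
  assumes "\<forall>v\<in>set Xs. fst v < N" "distinct Xs"
  shows "intervened_process M N p Phi eta Xs x (intervened_solution N p Phi X Xs x)"
proof -
  obtain C where "\<And>v. fst v < N \<Longrightarrow> intervened_solution N p Phi X Xs x v \<in> borel_measurable M"
    "\<And>v. fst v < N \<Longrightarrow> integrable M (\<lambda>\<omega>. (intervened_solution N p Phi X Xs x v \<omega>)\<^sup>2)"
    "\<And>v. fst v < N \<Longrightarrow> (\<integral>\<omega>. (intervened_solution N p Phi X Xs x v \<omega>)\<^sup>2 \<partial>M) \<le> C"
    using intervened_solution_square_integrable[OF assms(1)] by blast
  then show ?thesis
    using intervened_solution_at_intervention[OF assms(2)] intervened_solution_var_equation[OF assms(1)]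
    unfolding intervened_process_def by blast
qed

lemma intervened_solution_mean:
  assumes Xs: "\<forall>v\<in>set Xs. fst v < N" and Y: "fst Y < N" "Y \<notin> set Xs"
  shows "(\<integral>\<omega>. intervened_solution N p Phi X Xs x Y \<omega> \<partial>M)
      = (\<Sum>l<length Xs. theta N p Phi (set Xs) (Xs ! l) Y * x l)"
proof -
  have XsN: "fst (Xs ! l) < N" if "l < length Xs" for l using Xs that by simp
  define \<theta> where "\<theta> l = theta N p Phi (set Xs) (Xs ! l) Y" for l
  have sol: "intervened_solution N p Phi X Xs x Y \<omega> = X Y \<omega> + (\<Sum>l<length Xs. \<theta> l * (x l - X (Xs ! l) \<omega>))"
    for \<omega> using Y by (simp add: intervened_solution_def path_effect_def \<theta>_def)
  have int: "integrable M (\<lambda>\<omega>. \<theta> l * (x l - X (Xs ! l) \<omega>))" if "l < length Xs" for l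
    using X_integrable[OF XsN[OF that]] by simp
  have "(\<integral>\<omega>. intervened_solution N p Phi X Xs x Y \<omega> \<partial>M)
      = (\<integral>\<omega>. X Y \<omega> \<partial>M) + (\<integral>\<omega>. (\<Sum>l<length Xs. \<theta> l * (x l - X (Xs ! l) \<omega>)) \<partial>M)"
    unfolding sol
    by (rule Bochner_Integration.integral_add[OF X_integrable[OF Y(1)]])
      (auto intro!: Bochner_Integration.integrable_sum int)
  also have "(\<integral>\<omega>. (\<Sum>l<length Xs. \<theta> l * (x l - X (Xs ! l) \<omega>)) \<partial>M)
      = (\<Sum>l<length Xs. \<integral>\<omega>. \<theta> l * (x l - X (Xs ! l) \<omega>) \<partial>M)"
    by (rule Bochner_Integration.integral_sum) (use int in auto)
  also have "\<dots> = (\<Sum>l<length Xs. \<theta> l * x l)"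
    using X_mean_zero[OF XsN] X_integrable[OF XsN] by (simp add: prob_space)
  finally show ?thesis using X_mean_zero[OF Y(1)] by (simp add: \<theta>_def)
qed

lemma intervened_process_mean:
  assumes Xs: "\<forall>v\<in>set Xs. fst v < N" "distinct Xs"
    and Xi: "intervened_process M N p Phi eta Xs x Xi" and Y: "fst Y < N" "Y \<notin> set Xs"
  shows "(\<integral>\<omega>. Xi Y \<omega> \<partial>M) = (\<Sum>l<length Xs. theta N p Phi (set Xs) (Xs ! l) Y * x l)"
proof -
  note sol = intervened_process_intervened_solution[OF Xs, of x]
  have "AE \<omega> in M. Xi Y \<omega> = intervened_solution N p Phi X Xs x Y \<omega>"
    by (rule intervened_process_unique[OF var_stable Xi sol Y(1)])
  moreover have "Xi Y \<in> borel_measurable M" "intervened_solution N p Phi X Xs x Y \<in> borel_measurable M"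
    using Xi sol Y(1) unfolding intervened_process_def by blast+
  ultimately have "(\<integral>\<omega>. Xi Y \<omega> \<partial>M) = (\<integral>\<omega>. intervened_solution N p Phi X Xs x Y \<omega> \<partial>M)"
    by (intro integral_cong_AE) auto
  then show ?thesis using intervened_solution_mean[OF Xs(1) Y] by simp
qed

text \<open>The residual is itself a linear combination of the jointly Gaussian process, so no
  further ancestors are needed.\<close>

lemma var_linear_decomposition:
  assumes Xs: "\<forall>v\<in>set Xs. fst v < N" and Y: "fst Y < N"
  shows "\<exists>S c Eta. finite S \<and> S \<subseteq> anc_not N p Phi Y (set Xs) \<and> gaussian_rv M Eta \<and>
    (\<forall>\<omega>\<in>space M. X Y \<omega> = (\<Sum>l<length Xs. theta N p Phi (set Xs) (Xs ! l) Y * X (Xs ! l) \<omega>)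
      + (\<Sum>v\<in>S. c v * X v \<omega>) + Eta \<omega>)"
proof -
  define Eta where "Eta \<omega> = X Y \<omega> + (-1) * (\<Sum>l<length Xs. theta N p Phi (set Xs) (Xs ! l) Y * X (Xs ! l) \<omega>)" for \<omega>
  have "noise_limit M N eta Eta"
    unfolding Eta_def using Xs
    by (intro noise_limit_add noise_limit_cmult noise_limit_sum noise_limit_X Y) auto
  then have "gaussian_rv M Eta" by (rule noise_limit_gaussian)
  then show ?thesis by (intro exI[of _ "{}"] exI[of _ "\<lambda>_. 0"] exI[of _ Eta]) (simp add: Eta_def)
qed

end

theorem proposition1:
  fixes M :: "'a measure" and N p :: nat and Phi :: "nat \<Rightarrow> nat \<Rightarrow> nat \<Rightarrow> real"
    and X eta :: "node \<Rightarrow> 'a \<Rightarrow> real" and Xs Ys :: "node list"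
  assumes var: "stationary_VAR M N p Phi X eta"
    and Xs_ok: "\<forall>v\<in>set Xs. fst v < N" and Ys_ok: "\<forall>v\<in>set Ys. fst v < N"
    and dXs: "distinct Xs" and dYs: "distinct Ys"
    and disj: "set Xs \<inter> set Ys = {}"
  shows "(\<forall>j<length Ys. \<exists>S c Eta. finite S \<and> S \<subseteq> anc_not N p Phi (Ys ! j) (set Xs) \<and> gaussian_rv M Eta \<and>
            (\<forall>\<omega>\<in>space M. X (Ys ! j) \<omega> =
               (\<Sum>l<length Xs. theta N p Phi (set Xs) (Xs ! l) (Ys ! j) * X (Xs ! l) \<omega>)
               + (\<Sum>v\<in>S. c v * X v \<omega>) + Eta \<omega>))
       \<and> (\<forall>x::nat \<Rightarrow> real.
            (\<exists>Xi. intervened_process M N p Phi eta Xs x Xi) \<and>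
            (\<forall>Xi. intervened_process M N p Phi eta Xs x Xi \<longrightarrow>
               (\<forall>j<length Ys. (\<integral>\<omega>. Xi (Ys ! j) \<omega> \<partial>M) =
                  (\<Sum>l<length Xs. theta N p Phi (set Xs) (Xs ! l) (Ys ! j) * x l))))"
proof -
  interpret stationary_var M N p Phi X eta by unfold_locales (rule var)
  have Ys: "fst (Ys ! j) < N" "Ys ! j \<notin> set Xs" if "j < length Ys" for j
    using Ys_ok disj that by auto
  show ?thesis
    using var_linear_decomposition[OF Xs_ok Ys(1)] intervened_process_intervened_solution[OF Xs_ok dXs]
      intervened_process_mean[OF Xs_ok dXs _ Ys] by blast
qed

end
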